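(* Let $Q$ be a finite quiver, $R\subseteq\mathbb{C}Q_{\ge1}$ a finite-dimensional $\mathbb{C}Q_0$-sub-bimodule of bounded type, $(B,\mathfrak{m})$ a deformation base, $\psi:R\to\mathfrak{m}\mathbb{C}Q$ a $\mathbb{C}Q_0$-bimodule map and $P=(\mathrm{Id}+\psi)(R)$. If $I(P)$ is quasi-flat, then $I(P)_{\mathbb{C}Q}$ is quasi-flat, i.e. $I(P)_{\mathbb{C}Q}\cap\mathfrak{m}\mathbb{C}Q\subseteq\mathfrak{m}I(P)_{\mathbb{C}Q}$.
   Context: Deformation base: complete local Noetherian unital $\mathbb{C}$-algebra $B$ with maximal ideal $\mathfrak{m}$, $B/\mathfrak{m}=\mathbb{C}$; $B\widehat{\otimes}X=\varprojlim(B/\mathfrak{m}^k\otimes X)$; for a subspace $Y\subseteq B\widehat{\otimes}X$, $\mathfrak{m}Y=\{\sum_im_iy_i:y_i\in Y,m_i\in\mathfrak{m}^{k_i},k_i\ge1,k_i\to\infty\}$, and $\mathfrak{m}X$ is the image of $\mathfrak{m}\widehat{\otimes}X$. $\widehat{\mathbb{C}Q}$ is the completed path algebra. $(P)=\{\sum_{i\ge0}p_i(r_i+\psi(r_i))q_i: r_i\in R,p_i,q_i\text{ paths},|p_i|+|q_i|\to\infty\}\subseteq B\widehat{\otimes}\widehat{\mathbb{C}Q}$; $I(P)=\{\sum_jb_jy_j:y_j\in(P),b_j\in\mathfrak{m}^{k_j},k_j\to\infty\}$; $I(P)$ is quasi-flat if $I(P)\cap\mathfrak{m}\widehat{\mathbb{C}Q}\subseteq\mathfrak{m}I(P)$.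 $I(P)_{\mathbb{C}Q}=\{\sum_ib_ip_i(r_i+\psi(r_i))q_i:b_i\in\mathfrak{m}^{k_i},k_i\to\infty,r_i\in R,p_i,q_i\text{ paths}\}\subseteq B\widehat{\otimes}\mathbb{C}Q$. Bounded type: $R$ has a basis $F$ (each element in some $e_v\mathbb{C}Qe_w$) such that, with $\sim$ the equivalence relation on paths generated by $pc_iq\sim pc_jq$ whenever $c_i,c_j$ are paths with nonzero coefficient in the same $c\in F$, $h(N)=\sup\{|q|:\exists p,|p|\le N,p\sim q\}<\infty$ for all $N$. *)

theory Defs
  imports Complex_Main
begin

section \<open>Quivers and paths\<close>

text \<open>A path is a triple (start vertex, end vertex, list of arrows).  Trivial paths
 e_v are (v, v, []).  The product p q of paths is nonzero iff pend p = pstart q.\<close>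

type_synonym ('v,'a) qpath = "'v \<times> 'v \<times> 'a list"

definition pstart :: "('v,'a) qpath \<Rightarrow> 'v" where "pstart p = fst p"
definition pend :: "('v,'a) qpath \<Rightarrow> 'v" where "pend p = fst (snd p)"
definition parrows :: "('v,'a) qpath \<Rightarrow> 'a list" where "parrows p = snd (snd p)"
definition plen :: "('v,'a) qpath \<Rightarrow> nat" where "plen p = length (parrows p)"

definition is_path :: "'v set \<Rightarrow> 'a set \<Rightarrow> ('a \<Rightarrow> 'v) \<Rightarrow> ('a \<Rightarrow> 'v) \<Rightarrow> ('v,'a) qpath \<Rightarrow> bool" where
  "is_path V A s t p \<longleftrightarrow> pstart p \<in> V \<and> pend p \<in> V \<and> set (parrows p) \<subseteq> A \<and>
     (parrows p = [] \<longrightarrow> pstart p = pend p) \<and>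
     (parrows p \<noteq> [] \<longrightarrow> s (hd (parrows p)) = pstart p \<and> t (last (parrows p)) = pend p \<and>
        (\<forall>i. Suc i < length (parrows p) \<longrightarrow> t (parrows p ! i) = s (parrows p ! Suc i)))"

definition pcat :: "('v,'a) qpath \<Rightarrow> ('v,'a) qpath \<Rightarrow> ('v,'a) qpath" where
  "pcat p q = (pstart p, pend q, parrows p @ parrows q)"

definition finite_quiver :: "'v set \<Rightarrow> 'a set \<Rightarrow> ('a \<Rightarrow> 'v) \<Rightarrow> ('a \<Rightarrow> 'v) \<Rightarrow> bool" where
  "finite_quiver V A s t \<longleftrightarrow> finite V \<and> finite A \<and> (\<forall>a\<in>A. s a \<in> V \<and> t a \<in> V)"

text \<open>Elements of (completed) path algebras with coefficients in a ring are functions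
 from paths to coefficients (vanishing off genuine paths).\<close>

definition pmul3 :: "'v set \<Rightarrow> 'a set \<Rightarrow> ('a \<Rightarrow> 'v) \<Rightarrow> ('a \<Rightarrow> 'v) \<Rightarrow>
    ('v,'a) qpath \<Rightarrow> (('v,'a) qpath \<Rightarrow> 'r::comm_monoid_add) \<Rightarrow> ('v,'a) qpath \<Rightarrow> ('v,'a) qpath \<Rightarrow> 'r" where
  "pmul3 V A s t p f q w =
     (\<Sum>u \<in> {u. is_path V A s t u \<and> pend p = pstart u \<and> pend u = pstart q \<and> pcat (pcat p u) q = w}. f u)"

text \<open>Left / right multiplication by the idempotent e_v.\<close>
definition lvert :: "'v \<Rightarrow> (('v,'a) qpath \<Rightarrow> 'r::zero) \<Rightarrow> ('v,'a) qpath \<Rightarrow> 'r" where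
  "lvert v f w = (if pstart w = v then f w else 0)"
definition rvert :: "'v \<Rightarrow> (('v,'a) qpath \<Rightarrow> 'r::zero) \<Rightarrow> ('v,'a) qpath \<Rightarrow> 'r" where
  "rvert v f w = (if pend w = v then f w else 0)"

section \<open>Linear algebra over C for subspaces of CQ\<close>

definition cspan :: "(('v,'a) qpath \<Rightarrow> complex) set \<Rightarrow> (('v,'a) qpath \<Rightarrow> complex) set" where
  "cspan F = {f. \<exists>G c. finite G \<and> G \<subseteq> F \<and> (\<forall>w. f w = (\<Sum>g\<in>G. c g * g w))}"

definition clin_indep :: "(('v,'a) qpath \<Rightarrow> complex) set \<Rightarrow> bool" where
  "clin_indep F \<longleftrightarrow> (\<forall>G c. finite G \<and> G \<subseteq> F \<and> (\<forall>w. (\<Sum>g\<in>G. c g * g w) = 0) \<longrightarrow> (\<forall>g\<in>G. c g = 0))"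

definition fd_sub_bimodule_ge1 :: "'v set \<Rightarrow> 'a set \<Rightarrow> ('a \<Rightarrow> 'v) \<Rightarrow> ('a \<Rightarrow> 'v) \<Rightarrow>
    (('v,'a) qpath \<Rightarrow> complex) set \<Rightarrow> bool" where
  "fd_sub_bimodule_ge1 V A s t R \<longleftrightarrow>
     (\<forall>r\<in>R. finite {w. r w \<noteq> 0} \<and> (\<forall>w. r w \<noteq> 0 \<longrightarrow> is_path V A s t w \<and> 1 \<le> plen w)) \<and>
     (\<lambda>w. 0) \<in> R \<and>
     (\<forall>r1\<in>R. \<forall>r2\<in>R. (\<lambda>w. r1 w + r2 w) \<in> R) \<and>
     (\<forall>c. \<forall>r\<in>R. (\<lambda>w. c * r w) \<in> R) \<and>
     (\<forall>v\<in>V. \<forall>r\<in>R. lvert v r \<in> R \<and> rvert v r \<in> R) \<and>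
     (\<exists>G. finite G \<and> G \<subseteq> R \<and> R \<subseteq> cspan G)"

definition sim_step :: "'v set \<Rightarrow> 'a set \<Rightarrow> ('a \<Rightarrow> 'v) \<Rightarrow> ('a \<Rightarrow> 'v) \<Rightarrow>
    (('v,'a) qpath \<Rightarrow> complex) set \<Rightarrow> ('v,'a) qpath \<Rightarrow> ('v,'a) qpath \<Rightarrow> bool" where
  "sim_step V A s t F x y \<longleftrightarrow> (\<exists>c\<in>F. \<exists>ci cj p q. c ci \<noteq> 0 \<and> c cj \<noteq> 0 \<and>
      is_path V A s t p \<and> is_path V A s t q \<and>
      pend p = pstart ci \<and> pend ci = pstart q \<and> pend p = pstart cj \<and> pend cj = pstart q \<and>
      x = pcat (pcat p ci) q \<and> y = pcat (pcat p cj) q)"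

definition bounded_type :: "'v set \<Rightarrow> 'a set \<Rightarrow> ('a \<Rightarrow> 'v) \<Rightarrow> ('a \<Rightarrow> 'v) \<Rightarrow>
    (('v,'a) qpath \<Rightarrow> complex) set \<Rightarrow> bool" where
  "bounded_type V A s t R \<longleftrightarrow> (\<exists>F. F \<subseteq> R \<and> clin_indep F \<and> R \<subseteq> cspan F \<and>
     (\<forall>c\<in>F. \<exists>v\<in>V. \<exists>w\<in>V. \<forall>u. c u \<noteq> 0 \<longrightarrow> pstart u = v \<and> pend u = w) \<and>
     (\<forall>N. \<exists>M. \<forall>p q. is_path V A s t p \<and> plen p \<le> N \<and> equivclp (sim_step V A s t F) p q
            \<longrightarrow> plen q \<le> M))"

section \<open>Commutative algebra: deformation bases\<close>

definition is_ideal :: "'b::comm_ring_1 set \<Rightarrow> bool" where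
  "is_ideal I \<longleftrightarrow> 0 \<in> I \<and> (\<forall>x\<in>I. \<forall>y\<in>I. x + y \<in> I) \<and> (\<forall>a. \<forall>x\<in>I. a * x \<in> I)"

definition ideal_gen :: "'b::comm_ring_1 set \<Rightarrow> 'b set" where
  "ideal_gen S = \<Inter>{I. is_ideal I \<and> S \<subseteq> I}"

primrec mpow :: "'b::comm_ring_1 set \<Rightarrow> nat \<Rightarrow> 'b set" where
  "mpow m 0 = UNIV"
| "mpow m (Suc k) = ideal_gen {a * b | a b. a \<in> m \<and> b \<in> mpow m k}"

definition maximal_ideal :: "'b::comm_ring_1 set \<Rightarrow> bool" where
  "maximal_ideal M \<longleftrightarrow> is_ideal M \<and> M \<noteq> UNIV \<and>
     (\<forall>J. is_ideal J \<and> M \<subseteq> J \<longrightarrow> J = M \<or> J = UNIV)"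

definition noetherian_ring :: "'b::comm_ring_1 itself \<Rightarrow> bool" where
  "noetherian_ring _ \<longleftrightarrow> (\<forall>I::'b set. is_ideal I \<longrightarrow> (\<exists>F. finite F \<and> I = ideal_gen F))"

definition madic_complete :: "'b::comm_ring_1 set \<Rightarrow> bool" where
  "madic_complete m \<longleftrightarrow> (\<Inter>k. mpow m k) = {0} \<and>
     (\<forall>x::nat \<Rightarrow> 'b. (\<forall>k. \<exists>N. \<forall>n\<ge>N. \<forall>n'\<ge>N. x n - x n' \<in> mpow m k) \<longrightarrow>
        (\<exists>L. \<forall>k. \<exists>N. \<forall>n\<ge>N. x n - L \<in> mpow m k))"

definition ring_hom_C :: "(complex \<Rightarrow> 'b::comm_ring_1) \<Rightarrow> bool" where
  "ring_hom_C \<iota> \<longleftrightarrow> \<iota> 1 = 1 \<and> (\<forall>x y. \<iota> (x + y) = \<iota> x + \<iota> y) \<and> (\<forall>x y. \<iota> (x * y) = \<iota> x * \<iota> y)"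

definition deformation_base :: "(complex \<Rightarrow> 'b::comm_ring_1) \<Rightarrow> 'b set \<Rightarrow> bool" where
  "deformation_base \<iota> m \<longleftrightarrow> ring_hom_C \<iota> \<and> maximal_ideal m \<and>
     (\<forall>M. maximal_ideal M \<longrightarrow> M = m) \<and> noetherian_ring TYPE('b) \<and> madic_complete m \<and>
     (\<forall>b. \<exists>!c. b - \<iota> c \<in> m)"

section \<open>Completed tensor products, infinite sums, ideals I(P)\<close>

definition msums :: "'b::comm_ring_1 set \<Rightarrow> nat set \<Rightarrow> (nat \<Rightarrow> 'b) \<Rightarrow> 'b \<Rightarrow> bool" where
  "msums m J f L \<longleftrightarrow> (\<forall>n. \<exists>N. \<forall>M\<ge>N. (\<Sum>j\<in>J \<inter> {..<M}. f j) - L \<in> mpow m n)"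

text \<open>Sums  sum_i b_i y_i  with y_i \<in> Y, b_i \<in> m^{k_i}, k_i \<ge> k0, k_i \<rightarrow> \<infinity>
 (k0 = 1 gives mY, k0 = 0 gives the closed ideal-type span).  Convergence is
 coefficientwise m-adic, which is the topology of the completed tensor product.\<close>
definition mlin :: "'b::comm_ring_1 set \<Rightarrow> nat \<Rightarrow> ('p \<Rightarrow> 'b) set \<Rightarrow> ('p \<Rightarrow> 'b) set" where
  "mlin m k0 Y = {x. \<exists>J b y k. (\<forall>i\<in>J. y i \<in> Y \<and> k0 \<le> k i \<and> b i \<in> mpow m (k i)) \<and>
       (\<forall>n. finite {i\<in>J. k i \<le> n}) \<and> (\<forall>w. msums m J (\<lambda>i. b i * y i w) (x w))}"

text \<open>m CQ-hat (image of m \<otimes>-hat CQ-hat) and m CQ (image of m \<otimes>-hat CQ) inside B \<otimes>-hat CQ-hat.\<close>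
definition mCQhat :: "'v set \<Rightarrow> 'a set \<Rightarrow> ('a \<Rightarrow> 'v) \<Rightarrow> ('a \<Rightarrow> 'v) \<Rightarrow> 'b::comm_ring_1 set \<Rightarrow>
    (('v,'a) qpath \<Rightarrow> 'b) set" where
  "mCQhat V A s t m = {f. (\<forall>w. f w \<in> m) \<and> (\<forall>w. \<not> is_path V A s t w \<longrightarrow> f w = 0)}"

definition mCQ :: "'v set \<Rightarrow> 'a set \<Rightarrow> ('a \<Rightarrow> 'v) \<Rightarrow> ('a \<Rightarrow> 'v) \<Rightarrow> 'b::comm_ring_1 set \<Rightarrow>
    (('v,'a) qpath \<Rightarrow> 'b) set" where
  "mCQ V A s t m = {f. f \<in> mCQhat V A s t m \<and> (\<forall>k. finite {w. f w \<notin> mpow m k})}"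

definition bimod_map_to_mCQ :: "'v set \<Rightarrow> 'a set \<Rightarrow> ('a \<Rightarrow> 'v) \<Rightarrow> ('a \<Rightarrow> 'v) \<Rightarrow>
    (complex \<Rightarrow> 'b::comm_ring_1) \<Rightarrow> 'b set \<Rightarrow> (('v,'a) qpath \<Rightarrow> complex) set \<Rightarrow>
    ((('v,'a) qpath \<Rightarrow> complex) \<Rightarrow> (('v,'a) qpath \<Rightarrow> 'b)) \<Rightarrow> bool" where
  "bimod_map_to_mCQ V A s t \<iota> m R \<psi> \<longleftrightarrow>
     (\<forall>r\<in>R. \<psi> r \<in> mCQ V A s t m) \<and>
     (\<forall>r1\<in>R. \<forall>r2\<in>R. \<forall>w. \<psi> (\<lambda>u. r1 u + r2 u) w = \<psi> r1 w + \<psi> r2 w) \<and>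
     (\<forall>c. \<forall>r\<in>R. \<forall>w. \<psi> (\<lambda>u. c * r u) w = \<iota> c * \<psi> r w) \<and>
     (\<forall>v\<in>V. \<forall>r\<in>R. \<psi> (lvert v r) = lvert v (\<psi> r) \<and> \<psi> (rvert v r) = rvert v (\<psi> r))"

definition rpsi :: "(complex \<Rightarrow> 'b::comm_ring_1) \<Rightarrow>
    ((('v,'a) qpath \<Rightarrow> complex) \<Rightarrow> (('v,'a) qpath \<Rightarrow> 'b)) \<Rightarrow>
    (('v,'a) qpath \<Rightarrow> complex) \<Rightarrow> ('v,'a) qpath \<Rightarrow> 'b" where
  "rpsi \<iota> \<psi> r w = \<iota> (r w) + \<psi> r w"

text \<open>(P) = { sum_i p_i (r_i + psi r_i) q_i : |p_i| + |q_i| \<rightarrow> \<infinity> }; index set J \<subseteq> nat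
 (possibly finite).  Coefficients are finite sums since only terms with |p_i|+|q_i| \<le> |w|
 contribute to the coefficient of w.\<close>
definition Pideal_gen :: "'v set \<Rightarrow> 'a set \<Rightarrow> ('a \<Rightarrow> 'v) \<Rightarrow> ('a \<Rightarrow> 'v) \<Rightarrow>
    (complex \<Rightarrow> 'b::comm_ring_1) \<Rightarrow> (('v,'a) qpath \<Rightarrow> complex) set \<Rightarrow>
    ((('v,'a) qpath \<Rightarrow> complex) \<Rightarrow> (('v,'a) qpath \<Rightarrow> 'b)) \<Rightarrow> (('v,'a) qpath \<Rightarrow> 'b) set" where
  "Pideal_gen V A s t \<iota> R \<psi> = {x. \<exists>(J::nat set) r p q.
      (\<forall>i\<in>J. r i \<in> R \<and> is_path V A s t (p i) \<and> is_path V A s t (q i)) \<and>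
      (\<forall>n. finite {i\<in>J. plen (p i) + plen (q i) \<le> n}) \<and>
      (\<forall>w. x w = (\<Sum>i\<in>{i\<in>J. plen (p i) + plen (q i) \<le> plen w}.
                    pmul3 V A s t (p i) (rpsi \<iota> \<psi> (r i)) (q i) w))}"

definition IP :: "'v set \<Rightarrow> 'a set \<Rightarrow> ('a \<Rightarrow> 'v) \<Rightarrow> ('a \<Rightarrow> 'v) \<Rightarrow>
    (complex \<Rightarrow> 'b::comm_ring_1) \<Rightarrow> 'b set \<Rightarrow> (('v,'a) qpath \<Rightarrow> complex) set \<Rightarrow>
    ((('v,'a) qpath \<Rightarrow> complex) \<Rightarrow> (('v,'a) qpath \<Rightarrow> 'b)) \<Rightarrow> (('v,'a) qpath \<Rightarrow> 'b) set" where
  "IP V A s t \<iota> m R \<psi> = mlin m 0 (Pideal_gen V A s t \<iota> R \<psi>)"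

definition IP_CQ :: "'v set \<Rightarrow> 'a set \<Rightarrow> ('a \<Rightarrow> 'v) \<Rightarrow> ('a \<Rightarrow> 'v) \<Rightarrow>
    (complex \<Rightarrow> 'b::comm_ring_1) \<Rightarrow> 'b set \<Rightarrow> (('v,'a) qpath \<Rightarrow> complex) set \<Rightarrow>
    ((('v,'a) qpath \<Rightarrow> complex) \<Rightarrow> (('v,'a) qpath \<Rightarrow> 'b)) \<Rightarrow> (('v,'a) qpath \<Rightarrow> 'b) set" where
  "IP_CQ V A s t \<iota> m R \<psi> = mlin m 0
     {pmul3 V A s t p (rpsi \<iota> \<psi> r) q | p r q. r \<in> R \<and> is_path V A s t p \<and> is_path V A s t q}"

end

theory Submission
  imports Defs "HOL-Library.Countable_Set"
begin

text \<open>An element \<open>x\<close> of \<open>I(P)\<^sub>\<complex>\<^sub>Q \<inter> m\<complex>Q\<close> lies in \<open>I(P) \<inter> m\<complex>Q\<close>-hat, so quasi-flatness of \<open>I(P)\<close>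
  writes it as an \<open>m\<close>-adic series of order \<open>\<ge> 1\<close> in elements of \<open>(P)\<close>. We trade such a series,
  one \<open>m\<close>-adic degree \<open>a\<close> at a time, for finitely many monomials \<open>p (r + \<psi> r) q\<close>. Modulo
  \<open>m\<^sup>a\<^sup>+\<^sup>1\<close> the element is supported on finitely many paths; by bounded type their \<open>\<sim>\<close>-closure \<open>C\<close>
  has bounded length, so only the finitely many terms with \<open>|p| + |q|\<close> bounded meet \<open>C\<close>, and what
  remains vanishes modulo \<open>m\<close> on \<open>C\<close>. Expanding its degree-\<open>a\<close> coefficients in a basis of
  \<open>m\<^sup>a / m\<^sup>a\<^sup>+\<^sup>1\<close> over \<open>B / m = \<complex>\<close> shows that this remainder is \<open>\<Sum> \<mu> Y\<^sub>\<mu>\<close> with \<open>Y\<^sub>\<mu> \<in> I(P)\<close> having all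
  coefficients in \<open>m\<close>; quasi-flatness of \<open>I(P)\<close> moves it to degree \<open>a + 1\<close>. The monomials collected
  in all degrees sum to \<open>x\<close>, exhibiting \<open>x \<in> m I(P)\<^sub>\<complex>\<^sub>Q\<close>.\<close>

section \<open>Powers of an ideal\<close>

lemma is_ideal_ideal_gen: "is_ideal (ideal_gen S)"
  unfolding ideal_gen_def is_ideal_def by auto

lemma ideal_gen_subset: "S \<subseteq> ideal_gen S"
  unfolding ideal_gen_def by auto

lemma ideal_gen_minimal: "is_ideal I \<Longrightarrow> S \<subseteq> I \<Longrightarrow> ideal_gen S \<subseteq> I"
  unfolding ideal_gen_def by auto

lemma ideal_zero: "is_ideal I \<Longrightarrow> 0 \<in> I"
  by (simp add: is_ideal_def)

lemma ideal_add: "is_ideal I \<Longrightarrow> x \<in> I \<Longrightarrow> y \<in> I \<Longrightarrow> x + y \<in> I"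
  by (simp add: is_ideal_def)

lemma ideal_mult: "is_ideal I \<Longrightarrow> x \<in> I \<Longrightarrow> a * x \<in> I"
  by (simp add: is_ideal_def)

lemma ideal_diff: "is_ideal I \<Longrightarrow> x \<in> I \<Longrightarrow> y \<in> I \<Longrightarrow> x - y \<in> I"
  using ideal_add ideal_mult[of I y "- 1"] by force

lemma ideal_sum: "is_ideal I \<Longrightarrow> (\<And>i. i \<in> X \<Longrightarrow> f i \<in> I) \<Longrightarrow> sum f X \<in> I"
  by (induction X rule: infinite_finite_induct) (auto simp: ideal_zero ideal_add)

lemma is_ideal_mpow: "is_ideal (mpow m k)"
  by (cases k) (simp_all add: is_ideal_def[of UNIV] is_ideal_ideal_gen)

lemma mpow_zero [simp]: "0 \<in> mpow m k"
  by (rule ideal_zero[OF is_ideal_mpow])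

lemma mpow_add: "x \<in> mpow m k \<Longrightarrow> y \<in> mpow m k \<Longrightarrow> x + y \<in> mpow m k"
  by (rule ideal_add[OF is_ideal_mpow])

lemma mpow_diff: "x \<in> mpow m k \<Longrightarrow> y \<in> mpow m k \<Longrightarrow> x - y \<in> mpow m k"
  by (rule ideal_diff[OF is_ideal_mpow])

lemma mpow_mult_left: "x \<in> mpow m k \<Longrightarrow> a * x \<in> mpow m k"
  by (rule ideal_mult[OF is_ideal_mpow])

lemma mpow_mult_right: "x \<in> mpow m k \<Longrightarrow> x * a \<in> mpow m k"
  by (metis mpow_mult_left mult.commute)

lemma mpow_sum: "(\<And>i. i \<in> X \<Longrightarrow> f i \<in> mpow m k) \<Longrightarrow> sum f X \<in> mpow m k"
  by (rule ideal_sum[OF is_ideal_mpow])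

lemma mpow_Suc_subset: "mpow m (Suc k) \<subseteq> mpow m k"
  unfolding mpow.simps(2) by (rule ideal_gen_minimal[OF is_ideal_mpow]) (auto intro: mpow_mult_left)

lemma mpow_antimono: "k \<le> k' \<Longrightarrow> mpow m k' \<subseteq> mpow m k"
  by (induction k' rule: dec_induct) (use mpow_Suc_subset in blast)+

lemma mpow_antimonoD: "x \<in> mpow m k' \<Longrightarrow> k \<le> k' \<Longrightarrow> x \<in> mpow m k"
  using mpow_antimono by blast

lemma mpow_Suc_mult: "a \<in> m \<Longrightarrow> b \<in> mpow m k \<Longrightarrow> a * b \<in> mpow m (Suc k)"
  using ideal_gen_subset by fastforce

lemma mpow_mult: "a \<in> mpow m i \<Longrightarrow> b \<in> mpow m j \<Longrightarrow> a * b \<in> mpow m (i + j)"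
proof (induction i arbitrary: a b)
  case 0
  then show ?case by (simp add: mpow_mult_left)
next
  case (Suc i)
  let ?T = "{a. \<forall>b\<in>mpow m j. a * b \<in> mpow m (Suc i + j)}"
  have "is_ideal ?T"
    unfolding is_ideal_def
    by (auto simp del: mpow.simps simp: distrib_right mult.assoc intro: mpow_add mpow_mult_left)
  moreover have "{x * y |x y. x \<in> m \<and> y \<in> mpow m i} \<subseteq> ?T"
    using Suc.IH by (auto simp del: mpow.simps simp: mult.assoc mpow_Suc_mult)
  ultimately have "mpow m (Suc i) \<subseteq> ?T"
    unfolding mpow.simps(2) by (rule ideal_gen_minimal)
  then show ?case using Suc.prems by auto
qed

declare mpow.simps(2) [simp del]

lemma ideal_gen_finite_lincomb:
  assumes "finite G" "x \<in> ideal_gen G"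
  obtains c where "x = (\<Sum>g\<in>G. c g * g)"
proof -
  let ?C = "{x. \<exists>c. x = (\<Sum>g\<in>G. c g * g)}"
  have "is_ideal ?C"
    unfolding is_ideal_def
  proof (intro conjI ballI allI)
    show "0 \<in> ?C" by (auto intro: exI[of _ "\<lambda>_. 0"])
  next
    fix x y assume "x \<in> ?C" "y \<in> ?C"
    then obtain c d where "x = (\<Sum>g\<in>G. c g * g)" "y = (\<Sum>g\<in>G. d g * g)" by blast
    then have "x + y = (\<Sum>g\<in>G. (c g + d g) * g)" by (simp add: sum.distrib distrib_right)
    then show "x + y \<in> ?C" by (intro CollectI exI)
  next
    fix a x assume "x \<in> ?C"
    then obtain c where "x = (\<Sum>g\<in>G. c g * g)" by blast
    then have "a * x = (\<Sum>g\<in>G. (a * c g) * g)" by (simp add: sum_distrib_left mult.assoc)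
    then show "a * x \<in> ?C" by (intro CollectI exI)
  qed
  moreover have "g0 \<in> ?C" if "g0 \<in> G" for g0
  proof -
    have "(\<Sum>g\<in>G. (if g = g0 then 1 else 0) * g) = (\<Sum>g\<in>G. if g = g0 then g else 0)"
      by (rule sum.cong) auto
    also have "\<dots> = g0" using assms(1) that by (simp add: sum.delta)
    finally show ?thesis by (intro CollectI exI[of _ "\<lambda>g. if g = g0 then 1 else 0"]) simp
  qed
  ultimately have "ideal_gen G \<subseteq> ?C" by (intro ideal_gen_minimal) auto
  then show ?thesis using assms(2) that by blast
qed

section \<open>Graded pieces of a deformation base\<close>

lemma ring_hom_C_0: "ring_hom_C \<iota> \<Longrightarrow> \<iota> 0 = 0"
  unfolding ring_hom_C_def by (metis add_cancel_right_right add_0)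

lemma ring_hom_C_add: "ring_hom_C \<iota> \<Longrightarrow> \<iota> (x + y) = \<iota> x + \<iota> y"
  unfolding ring_hom_C_def by simp

lemma ring_hom_C_mult: "ring_hom_C \<iota> \<Longrightarrow> \<iota> (x * y) = \<iota> x * \<iota> y"
  unfolding ring_hom_C_def by simp

lemma ring_hom_C_diff: "ring_hom_C \<iota> \<Longrightarrow> \<iota> (x - y) = \<iota> x - \<iota> y"
  by (metis ring_hom_C_add diff_add_cancel eq_diff_eq)

lemma ring_hom_C_sum: "ring_hom_C \<iota> \<Longrightarrow> \<iota> (sum f X) = (\<Sum>x\<in>X. \<iota> (f x))"
  by (induction X rule: infinite_finite_induct) (auto simp: ring_hom_C_0 ring_hom_C_add)

lemma deformation_base_ring_hom_C: "deformation_base \<iota> m \<Longrightarrow> ring_hom_C \<iota>"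
  unfolding deformation_base_def by blast

lemma deformation_base_ideal: "deformation_base \<iota> m \<Longrightarrow> is_ideal m"
  unfolding deformation_base_def maximal_ideal_def by blast

lemma deformation_base_residue:
  assumes "deformation_base \<iota> m"
  obtains res where "\<And>b. b - \<iota> (res b) \<in> m"
proof -
  have "\<forall>b. \<exists>c. b - \<iota> c \<in> m" using assms unfolding deformation_base_def by blast
  then show ?thesis using that by metis
qed

definition spans_mod_mpow :: "(complex \<Rightarrow> 'b::comm_ring_1) \<Rightarrow> 'b set \<Rightarrow> nat \<Rightarrow> 'b set \<Rightarrow> bool" where
  "spans_mod_mpow \<iota> m a X \<longleftrightarrow> finite X \<and> X \<subseteq> mpow m a \<and>
     (\<forall>b\<in>mpow m a. \<exists>c. b - (\<Sum>\<mu>\<in>X. \<iota> (c \<mu>) * \<mu>) \<in> mpow m (Suc a))"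

lemma spans_mod_mpow_exists:
  fixes \<iota> :: "complex \<Rightarrow> 'b::comm_ring_1"
  assumes db: "deformation_base \<iota> m"
  shows "\<exists>X. spans_mod_mpow \<iota> m a X"
proof -
  have "noetherian_ring TYPE('b)" using db unfolding deformation_base_def by blast
  then obtain G where G: "finite G" "mpow m a = ideal_gen G"
    unfolding noetherian_ring_def using is_ideal_mpow by blast
  have G_sub: "G \<subseteq> mpow m a" using G ideal_gen_subset by blast
  obtain res where res: "\<And>b. b - \<iota> (res b) \<in> m" using deformation_base_residue[OF db] by blast
  have "\<exists>c. b - (\<Sum>\<mu>\<in>G. \<iota> (c \<mu>) * \<mu>) \<in> mpow m (Suc a)" if "b \<in> mpow m a" for b
  proof -
    have "b \<in> ideal_gen G" using G(2) that by simp
    then obtain d where d: "b = (\<Sum>g\<in>G. d g * g)" by (rule ideal_gen_finite_lincomb[OF G(1)])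
    have "b - (\<Sum>\<mu>\<in>G. \<iota> (res (d \<mu>)) * \<mu>) = (\<Sum>g\<in>G. (d g - \<iota> (res (d g))) * g)"
      unfolding d by (simp add: sum_subtractf left_diff_distrib)
    also have "\<dots> \<in> mpow m (Suc a)"
      using G_sub by (intro mpow_sum mpow_Suc_mult[OF res]) blast
    finally show ?thesis by (rule exI[of _ "\<lambda>\<mu>. res (d \<mu>)"])
  qed
  then show ?thesis unfolding spans_mod_mpow_def using G(1) G_sub by (intro exI[of _ G]) blast
qed

lemma spans_mod_mpow_remove:
  fixes \<iota> :: "complex \<Rightarrow> 'b::comm_ring_1"
  assumes hom: "ring_hom_C \<iota>" and X: "spans_mod_mpow \<iota> m a X"
    and rel: "(\<Sum>\<mu>\<in>X. \<iota> (c \<mu>) * \<mu>) \<in> mpow m (Suc a)" and \<mu>0: "\<mu>0 \<in> X" "c \<mu>0 \<noteq> 0"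
  shows "spans_mod_mpow \<iota> m a (X - {\<mu>0})"
  unfolding spans_mod_mpow_def
proof (intro conjI ballI)
  have finX: "finite X" using X unfolding spans_mod_mpow_def by blast
  then show "finite (X - {\<mu>0})" by simp
  show "X - {\<mu>0} \<subseteq> mpow m a" using X unfolding spans_mod_mpow_def by blast
  fix b assume "b \<in> mpow m a"
  then obtain lam where lam: "b - (\<Sum>\<mu>\<in>X. \<iota> (lam \<mu>) * \<mu>) \<in> mpow m (Suc a)"
    using X unfolding spans_mod_mpow_def by blast
  \<comment> \<open>Eliminate \<open>\<mu>0\<close> using the relation, whose \<open>\<mu>0\<close>-coefficient is invertible in \<open>\<complex>\<close>.\<close>
  define K where "K = lam \<mu>0 / c \<mu>0"
  define lam' where "lam' \<mu> = lam \<mu> - K * c \<mu>" for \<mu>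
  have split: "(\<Sum>\<mu>\<in>X. f \<mu>) = f \<mu>0 + (\<Sum>\<mu>\<in>X - {\<mu>0}. f \<mu>)" for f :: "'b \<Rightarrow> 'b"
    using finX \<mu>0(1) by (rule sum.remove)
  have Kc: "\<iota> K * \<iota> (c \<mu>0) = \<iota> (lam \<mu>0)"
    using \<mu>0(2) by (simp add: K_def ring_hom_C_mult[OF hom, symmetric])
  have "(\<Sum>\<mu>\<in>X - {\<mu>0}. \<iota> (lam' \<mu>) * \<mu>)
      = (\<Sum>\<mu>\<in>X - {\<mu>0}. \<iota> (lam \<mu>) * \<mu>) - \<iota> K * (\<Sum>\<mu>\<in>X - {\<mu>0}. \<iota> (c \<mu>) * \<mu>)"
    by (simp add: lam'_def ring_hom_C_diff[OF hom] ring_hom_C_mult[OF hom] left_diff_distrib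
        sum_subtractf sum_distrib_left mult.assoc)
  also have "\<dots> = (\<Sum>\<mu>\<in>X. \<iota> (lam \<mu>) * \<mu>) - \<iota> K * (\<Sum>\<mu>\<in>X. \<iota> (c \<mu>) * \<mu>)"
    unfolding split[of "\<lambda>\<mu>. \<iota> (lam \<mu>) * \<mu>"] split[of "\<lambda>\<mu>. \<iota> (c \<mu>) * \<mu>"]
    using Kc by (simp add: algebra_simps)
  finally have "b - (\<Sum>\<mu>\<in>X - {\<mu>0}. \<iota> (lam' \<mu>) * \<mu>)
      = (b - (\<Sum>\<mu>\<in>X. \<iota> (lam \<mu>) * \<mu>)) + \<iota> K * (\<Sum>\<mu>\<in>X. \<iota> (c \<mu>) * \<mu>)"
    by (simp add: algebra_simps)
  also have "\<dots> \<in> mpow m (Suc a)"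
    using lam rel by (intro mpow_add mpow_mult_left)
  finally show "\<exists>lam. b - (\<Sum>\<mu>\<in>X - {\<mu>0}. \<iota> (lam \<mu>) * \<mu>) \<in> mpow m (Suc a)" by blast
qed

text \<open>A spanning set of minimal cardinality of the \<open>\<complex>\<close>-vector space \<open>m\<^sup>a / m\<^sup>a\<^sup>+\<^sup>1\<close> is a basis.\<close>

lemma independent_spans_mod_mpow_exists:
  fixes \<iota> :: "complex \<Rightarrow> 'b::comm_ring_1"
  assumes db: "deformation_base \<iota> m"
  obtains X where "spans_mod_mpow \<iota> m a X"
    "\<And>c. (\<Sum>\<mu>\<in>X. \<iota> (c \<mu>) * \<mu>) \<in> mpow m (Suc a) \<Longrightarrow> \<forall>\<mu>\<in>X. c \<mu> = 0"
proof -
  obtain X0 where "spans_mod_mpow \<iota> m a X0" using spans_mod_mpow_exists[OF db] by blast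
  then obtain X where X: "spans_mod_mpow \<iota> m a X"
    and minX: "\<And>Y. spans_mod_mpow \<iota> m a Y \<Longrightarrow> card X \<le> card Y"
    using ex_has_least_nat[of "spans_mod_mpow \<iota> m a" X0 card] by blast
  have indep: "c \<mu>0 = 0" if rel: "(\<Sum>\<mu>\<in>X. \<iota> (c \<mu>) * \<mu>) \<in> mpow m (Suc a)" and "\<mu>0 \<in> X" for c \<mu>0
  proof (rule ccontr)
    assume "c \<mu>0 \<noteq> 0"
    with deformation_base_ring_hom_C[OF db] X rel \<open>\<mu>0 \<in> X\<close>
    have "card X \<le> card (X - {\<mu>0})" by (intro minX spans_mod_mpow_remove)
    moreover have "finite X" using X unfolding spans_mod_mpow_def by blast
    then have "card (X - {\<mu>0}) < card X" using \<open>\<mu>0 \<in> X\<close> by (rule card_Diff1_less)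
    ultimately show False by simp
  qed
  show ?thesis by (rule that[OF X]) (use indep in blast)
qed

lemma graded_basis_exists:
  assumes db: "deformation_base \<iota> m"
  obtains X where "finite X" "X \<subseteq> mpow m a"
    "\<And>b. b \<in> mpow m a \<Longrightarrow> \<exists>y. b - (\<Sum>\<mu>\<in>X. y \<mu> * \<mu>) \<in> mpow m (Suc a)"
    "\<And>y \<mu>. (\<Sum>\<mu>\<in>X. y \<mu> * \<mu>) \<in> mpow m (Suc a) \<Longrightarrow> \<mu> \<in> X \<Longrightarrow> y \<mu> \<in> m"
proof -
  obtain X where X: "spans_mod_mpow \<iota> m a X"
    and indep: "\<And>c. (\<Sum>\<mu>\<in>X. \<iota> (c \<mu>) * \<mu>) \<in> mpow m (Suc a) \<Longrightarrow> \<forall>\<mu>\<in>X. c \<mu> = 0"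
    using independent_spans_mod_mpow_exists[OF db] by blast
  have finX: "finite X" and subX: "X \<subseteq> mpow m a" using X unfolding spans_mod_mpow_def by auto
  obtain res where res: "\<And>b. b - \<iota> (res b) \<in> m" using deformation_base_residue[OF db] by blast
  show ?thesis
  proof (rule that[OF finX subX])
    fix b assume "b \<in> mpow m a"
    then obtain c where "b - (\<Sum>\<mu>\<in>X. \<iota> (c \<mu>) * \<mu>) \<in> mpow m (Suc a)"
      using X unfolding spans_mod_mpow_def by blast
    then show "\<exists>y. b - (\<Sum>\<mu>\<in>X. y \<mu> * \<mu>) \<in> mpow m (Suc a)"
      by (rule exI[of _ "\<lambda>\<mu>. \<iota> (c \<mu>)"])
  next
    fix y \<mu> assume y: "(\<Sum>\<mu>\<in>X. y \<mu> * \<mu>) \<in> mpow m (Suc a)" and "\<mu> \<in> X"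
    have "(\<Sum>\<mu>\<in>X. \<iota> (res (y \<mu>)) * \<mu>) = (\<Sum>\<mu>\<in>X. y \<mu> * \<mu>) - (\<Sum>\<mu>\<in>X. (y \<mu> - \<iota> (res (y \<mu>))) * \<mu>)"
      by (simp add: sum_subtractf left_diff_distrib)
    also have "\<dots> \<in> mpow m (Suc a)"
      using subX by (intro mpow_diff[OF y] mpow_sum mpow_Suc_mult[OF res]) blast
    finally have "res (y \<mu>) = 0" using indep[of "\<lambda>\<mu>. res (y \<mu>)"] \<open>\<mu> \<in> X\<close> by blast
    then show "y \<mu> \<in> m"
      using res[of "y \<mu>"] ring_hom_C_0[OF deformation_base_ring_hom_C[OF db]] by simp
  qed
qed

lemma small_combination_decomposition:
  fixes \<iota> :: "complex \<Rightarrow> 'b::comm_ring_1" and T :: "'i \<Rightarrow> 'p \<Rightarrow> 'b"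
  assumes db: "deformation_base \<iota> m" and L: "finite L"
    and \<beta>: "\<And>i. i \<in> L \<Longrightarrow> \<beta> i \<in> mpow m a"
    and small: "\<And>w. (\<Sum>i\<in>L. \<beta> i * T i w) \<in> mpow m (Suc a)"
  shows "\<exists>X \<epsilon> y. finite X \<and> X \<subseteq> mpow m a \<and> (\<forall>i\<in>L. \<epsilon> i \<in> mpow m (Suc a)) \<and>
    (\<forall>w. (\<Sum>i\<in>L. \<beta> i * T i w) = (\<Sum>i\<in>L. \<epsilon> i * T i w) + (\<Sum>\<mu>\<in>X. \<mu> * (\<Sum>i\<in>L. y i \<mu> * T i w))) \<and>
    (\<forall>\<mu>\<in>X. \<forall>w. (\<Sum>i\<in>L. y i \<mu> * T i w) \<in> m)"
proof -
  obtain X where X: "finite X" "X \<subseteq> mpow m a"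
    and spans: "\<And>b. b \<in> mpow m a \<Longrightarrow> \<exists>y. b - (\<Sum>\<mu>\<in>X. y \<mu> * \<mu>) \<in> mpow m (Suc a)"
    and indep: "\<And>y \<mu>. (\<Sum>\<mu>\<in>X. y \<mu> * \<mu>) \<in> mpow m (Suc a) \<Longrightarrow> \<mu> \<in> X \<Longrightarrow> y \<mu> \<in> m"
    using graded_basis_exists[OF db] by blast
  have "\<forall>i\<in>L. \<exists>y. \<beta> i - (\<Sum>\<mu>\<in>X. y \<mu> * \<mu>) \<in> mpow m (Suc a)"
    using spans \<beta> by blast
  then obtain y where y: "\<And>i. i \<in> L \<Longrightarrow> \<beta> i - (\<Sum>\<mu>\<in>X. y i \<mu> * \<mu>) \<in> mpow m (Suc a)"
    by (metis bchoice)
  define \<epsilon> where "\<epsilon> i = \<beta> i - (\<Sum>\<mu>\<in>X. y i \<mu> * \<mu>)" for i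
  have decomp: "(\<Sum>i\<in>L. \<beta> i * T i w) = (\<Sum>i\<in>L. \<epsilon> i * T i w) + (\<Sum>\<mu>\<in>X. \<mu> * (\<Sum>i\<in>L. y i \<mu> * T i w))"
    for w
  proof -
    have "(\<Sum>\<mu>\<in>X. \<mu> * (\<Sum>i\<in>L. y i \<mu> * T i w)) = (\<Sum>i\<in>L. (\<Sum>\<mu>\<in>X. y i \<mu> * \<mu>) * T i w)"
      unfolding sum_distrib_right sum_distrib_left by (subst sum.swap) (simp add: mult_ac)
    then show ?thesis
      by (simp add: \<epsilon>_def left_diff_distrib sum_subtractf)
  qed
  have "(\<Sum>i\<in>L. y i \<mu> * T i w) \<in> m" if "\<mu> \<in> X" for \<mu> w
  proof (rule indep[OF _ that, of "\<lambda>\<mu>. \<Sum>i\<in>L. y i \<mu> * T i w"])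
    have "(\<Sum>\<mu>\<in>X. (\<Sum>i\<in>L. y i \<mu> * T i w) * \<mu>) = (\<Sum>i\<in>L. \<beta> i * T i w) - (\<Sum>i\<in>L. \<epsilon> i * T i w)"
      by (simp add: decomp mult.commute)
    also have "\<dots> \<in> mpow m (Suc a)"
      using y unfolding \<epsilon>_def by (intro mpow_diff[OF small] mpow_sum mpow_mult_right)
    finally show "(\<Sum>\<mu>\<in>X. (\<Sum>i\<in>L. y i \<mu> * T i w) * \<mu>) \<in> mpow m (Suc a)" .
  qed
  moreover have "\<forall>i\<in>L. \<epsilon> i \<in> mpow m (Suc a)" using y unfolding \<epsilon>_def by blast
  ultimately show ?thesis using X decomp by blast
qed

section \<open>\<open>m\<close>-adic series\<close>

text \<open>Unlike \<^const>\<open>mlin\<close>, convergence is tested on truncations by degree \<open>k\<^sub>i\<close> instead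
  of by index, which makes regrouping and rearranging series straightforward.\<close>

definition mseries_expansion ::
    "'b::comm_ring_1 set \<Rightarrow> nat \<Rightarrow> ('p \<Rightarrow> 'b) set \<Rightarrow> ('p \<Rightarrow> 'b) \<Rightarrow>
      'i set \<Rightarrow> ('i \<Rightarrow> 'b) \<Rightarrow> ('i \<Rightarrow> 'p \<Rightarrow> 'b) \<Rightarrow> ('i \<Rightarrow> nat) \<Rightarrow> bool" where
  "mseries_expansion m a Y z J b y k \<longleftrightarrow> (\<forall>i\<in>J. y i \<in> Y \<and> a \<le> k i \<and> b i \<in> mpow m (k i)) \<and>
     (\<forall>n. finite {i\<in>J. k i \<le> n}) \<and>
     (\<forall>w N. z w - (\<Sum>i\<in>{i\<in>J. k i < N}. b i * y i w) \<in> mpow m N)"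

definition mseries :: "'b::comm_ring_1 set \<Rightarrow> nat \<Rightarrow> ('p \<Rightarrow> 'b) set \<Rightarrow> ('p \<Rightarrow> 'b) \<Rightarrow> bool" where
  "mseries m a Y z \<longleftrightarrow> (\<exists>(J::nat set) b y k. mseries_expansion m a Y z J b y k)"

lemma mseriesE:
  assumes "mseries m a Y z"
  obtains J :: "nat set" and b y k where "\<And>i. i \<in> J \<Longrightarrow> y i \<in> Y \<and> a \<le> k i \<and> b i \<in> mpow m (k i)"
    "\<And>n. finite {i\<in>J. k i \<le> n}" "\<And>w N. z w - (\<Sum>i\<in>{i\<in>J. k i < N}. b i * y i w) \<in> mpow m N"
proof -
  obtain J :: "nat set" and b y k where "\<forall>i\<in>J. y i \<in> Y \<and> a \<le> k i \<and> b i \<in> mpow m (k i)"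
    "\<forall>n. finite {i\<in>J. k i \<le> n}" "\<forall>w N. z w - (\<Sum>i\<in>{i\<in>J. k i < N}. b i * y i w) \<in> mpow m N"
    using assms unfolding mseries_def mseries_expansion_def by blast
  then show thesis by (intro that[of J y k b]) auto
qed

text \<open>Any index type will do, since the finiteness condition makes \<open>J\<close> countable.\<close>

lemma mseriesI:
  fixes J :: "'i set" and k :: "'i \<Rightarrow> nat"
  assumes terms: "\<And>i. i \<in> J \<Longrightarrow> y i \<in> Y \<and> a \<le> k i \<and> b i \<in> mpow m (k i)"
    and fin: "\<And>n. finite {i\<in>J. k i \<le> n}"
    and conv: "\<And>w N. z w - (\<Sum>i\<in>{i\<in>J. k i < N}. b i * y i w) \<in> mpow m N"
  shows "mseries m a Y z"
proof -
  have "J = (\<Union>n. {i\<in>J. k i \<le> n})" by auto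
  moreover have "countable (\<Union>n. {i\<in>J. k i \<le> n})"
    using fin by (intro countable_UN) (auto intro: countable_finite)
  ultimately have "countable J" by simp
  then obtain f :: "'i \<Rightarrow> nat" where inj: "inj_on f J" by (auto simp: countable_def)
  define g where "g = the_inv_into J f"
  have gf: "\<And>i. i \<in> J \<Longrightarrow> g (f i) = i" unfolding g_def using inj by (simp add: the_inv_into_f_f)
  have image: "{j\<in>f ` J. P (g j)} = f ` {i\<in>J. P i}" for P
    using gf by force
  have "\<forall>j\<in>f ` J. (y \<circ> g) j \<in> Y \<and> a \<le> (k \<circ> g) j \<and> (b \<circ> g) j \<in> mpow m ((k \<circ> g) j)"
    using terms gf by auto
  moreover have "\<forall>n. finite {j\<in>f ` J. (k \<circ> g) j \<le> n}"
    using image[of "\<lambda>i. k i \<le> _"] fin by simp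
  moreover have "\<forall>w N. z w - (\<Sum>j\<in>{j\<in>f ` J. (k \<circ> g) j < N}. (b \<circ> g) j * (y \<circ> g) j w) \<in> mpow m N"
  proof (intro allI)
    fix w N
    have "inj_on f {i\<in>J. k i < N}" by (rule inj_on_subset[OF inj]) auto
    then have "(\<Sum>j\<in>{j\<in>f ` J. (k \<circ> g) j < N}. (b \<circ> g) j * (y \<circ> g) j w)
        = (\<Sum>i\<in>{i\<in>J. k i < N}. b i * y i w)"
      using image[of "\<lambda>i. k i < N"] by (simp add: sum.reindex gf)
    then show "z w - (\<Sum>j\<in>{j\<in>f ` J. (k \<circ> g) j < N}. (b \<circ> g) j * (y \<circ> g) j w) \<in> mpow m N"
      using conv by simp
  qed
  ultimately show ?thesis
    unfolding mseries_def mseries_expansion_def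
    by (intro exI[of _ "f ` J"] exI[of _ "b \<circ> g"] exI[of _ "y \<circ> g"]) blast
qed

lemma mseries_coeff: "mseries m a Y z \<Longrightarrow> z w \<in> mpow m a"
proof (elim mseriesE)
  fix J :: "nat set" and b y k
  assume terms: "\<And>i. i \<in> J \<Longrightarrow> y i \<in> Y \<and> a \<le> k i \<and> b i \<in> mpow m (k i)"
    and conv: "\<And>w N. z w - (\<Sum>i\<in>{i\<in>J. k i < N}. b i * y i w) \<in> mpow m N"
  have "{i\<in>J. k i < a} = {}" using terms by fastforce
  then show "z w \<in> mpow m a" using conv[of w a] by (simp only:) simp
qed

lemma mseries_mono:
  assumes "mseries m a Y z" "Y \<subseteq> Y'" "a' \<le> a"
  shows "mseries m a' Y' z"
  using assms(1)
proof (elim mseriesE)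
  fix J :: "nat set" and b y k
  assume "\<And>i. i \<in> J \<Longrightarrow> y i \<in> Y \<and> a \<le> k i \<and> b i \<in> mpow m (k i)"
    "\<And>n. finite {i\<in>J. k i \<le> n}" "\<And>w N. z w - (\<Sum>i\<in>{i\<in>J. k i < N}. b i * y i w) \<in> mpow m N"
  then show ?thesis using assms(2,3) by (intro mseriesI[of J y Y' a' k b]) (auto intro: le_trans)
qed

lemma mseries_member: "y \<in> Y \<Longrightarrow> mseries m 0 Y y"
  by (rule mseriesI[of "{()}" "\<lambda>_. y" Y 0 "\<lambda>_. 0" "\<lambda>_. 1"]) auto

lemma mseries_expansions_choice:
  fixes g :: "'i \<Rightarrow> 'p \<Rightarrow> 'b::comm_ring_1"
  assumes "\<And>i. i \<in> I \<Longrightarrow> mseries m (ord i) Y (g i)"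
  shows "\<exists>(J :: 'i \<Rightarrow> nat set) b y k. \<forall>i\<in>I. mseries_expansion m (ord i) Y (g i) (J i) (b i) (y i) (k i)"
proof -
  define expands where "expands i T \<longleftrightarrow> mseries_expansion m (ord i) Y (g i)
      (fst T) (fst (snd T)) (fst (snd (snd T))) (snd (snd (snd T)))"
    for i and T :: "nat set \<times> (nat \<Rightarrow> 'b) \<times> (nat \<Rightarrow> 'p \<Rightarrow> 'b) \<times> (nat \<Rightarrow> nat)"
  have "\<exists>T. expands i T" if "i \<in> I" for i
    using assms[OF that] unfolding mseries_def expands_def by force
  then obtain T where "\<And>i. i \<in> I \<Longrightarrow> expands i (T i)"
    using bchoice[of I expands] by blast
  then show ?thesis unfolding expands_def
    by (intro exI[of _ "\<lambda>i. fst (T i)"] exI[of _ "\<lambda>i. fst (snd (T i))"]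
        exI[of _ "\<lambda>i. fst (snd (snd (T i)))"] exI[of _ "\<lambda>i. snd (snd (snd (T i)))"]) blast
qed

lemma mseries_series:
  fixes I :: "'i set" and g :: "'i \<Rightarrow> 'p \<Rightarrow> 'b::comm_ring_1" and ord :: "'i \<Rightarrow> nat"
  assumes series: "\<And>i. i \<in> I \<Longrightarrow> mseries m (ord i) Y (g i)"
    and ord_ge: "\<And>i. i \<in> I \<Longrightarrow> a \<le> ord i"
    and fin: "\<And>n. finite {i\<in>I. ord i \<le> n}"
    and conv: "\<And>w N. x w - (\<Sum>i\<in>{i\<in>I. ord i < N}. g i w) \<in> mpow m N"
  shows "mseries m a Y x"
proof -
  have "\<exists>(J :: 'i \<Rightarrow> nat set) b y k. \<forall>i\<in>I. mseries_expansion m (ord i) Y (g i) (J i) (b i) (y i) (k i)"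
    using series by (rule mseries_expansions_choice)
  then obtain J :: "'i \<Rightarrow> nat set" and b y k
    where "\<forall>i\<in>I. mseries_expansion m (ord i) Y (g i) (J i) (b i) (y i) (k i)"
    by blast
  then have terms: "\<And>i j. i \<in> I \<Longrightarrow> j \<in> J i \<Longrightarrow> y i j \<in> Y \<and> ord i \<le> k i j \<and> b i j \<in> mpow m (k i j)"
    and fin_J: "\<And>i n. i \<in> I \<Longrightarrow> finite {j\<in>J i. k i j \<le> n}"
    and conv_J: "\<And>i w N. i \<in> I \<Longrightarrow> g i w - (\<Sum>j\<in>{j\<in>J i. k i j < N}. b i j * y i j w) \<in> mpow m N"
    unfolding mseries_expansion_def by simp_all
  show ?thesis
  proof (rule mseriesI[of "Sigma I J" "\<lambda>(i,j). y i j" Y a "\<lambda>(i,j). k i j" "\<lambda>(i,j). b i j"])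
    fix n
    have "{p \<in> Sigma I J. (case p of (i, j) \<Rightarrow> k i j) \<le> n}
        \<subseteq> Sigma {i\<in>I. ord i \<le> n} (\<lambda>i. {j\<in>J i. k i j \<le> n})"
      using terms by fastforce
    moreover have "finite (Sigma {i\<in>I. ord i \<le> n} (\<lambda>i. {j\<in>J i. k i j \<le> n}))"
      using fin fin_J by auto
    ultimately show "finite {p \<in> Sigma I J. (case p of (i, j) \<Rightarrow> k i j) \<le> n}"
      by (rule finite_subset)
  next
    fix w N
    have trunc: "{p \<in> Sigma I J. (case p of (i, j) \<Rightarrow> k i j) < N}
        = Sigma {i\<in>I. ord i < N} (\<lambda>i. {j\<in>J i. k i j < N})"
      using terms by fastforce
    have "finite {i\<in>I. ord i < N}" by (rule finite_subset[OF _ fin[of N]]) auto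
    moreover have "\<And>i. i \<in> I \<Longrightarrow> finite {j\<in>J i. k i j < N}"
      by (rule finite_subset[OF _ fin_J[of _ N]]) auto
    ultimately have regroup: "(\<Sum>p\<in>{p \<in> Sigma I J. (case p of (i, j) \<Rightarrow> k i j) < N}.
          (case p of (i, j) \<Rightarrow> b i j) * (case p of (i, j) \<Rightarrow> y i j) w)
        = (\<Sum>i\<in>{i\<in>I. ord i < N}. \<Sum>j\<in>{j\<in>J i. k i j < N}. b i j * y i j w)"
      unfolding trunc by (subst sum.Sigma) (auto simp: split_def)
    have "x w - (\<Sum>p\<in>{p \<in> Sigma I J. (case p of (i, j) \<Rightarrow> k i j) < N}.
          (case p of (i, j) \<Rightarrow> b i j) * (case p of (i, j) \<Rightarrow> y i j) w)
        = (x w - (\<Sum>i\<in>{i\<in>I. ord i < N}. g i w))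
          + (\<Sum>i\<in>{i\<in>I. ord i < N}. g i w - (\<Sum>j\<in>{j\<in>J i. k i j < N}. b i j * y i j w))"
      unfolding regroup by (simp add: sum_subtractf)
    also have "\<dots> \<in> mpow m N"
      by (intro mpow_add conv mpow_sum) (auto intro: conv_J)
    finally show "x w - (\<Sum>p\<in>{p \<in> Sigma I J. (case p of (i, j) \<Rightarrow> k i j) < N}.
        (case p of (i, j) \<Rightarrow> b i j) * (case p of (i, j) \<Rightarrow> y i j) w) \<in> mpow m N" .
  qed (use terms ord_ge in \<open>auto intro: le_trans\<close>)
qed

lemma mseries_single:
  assumes "y \<in> Y" "b \<in> mpow m k" "a \<le> k"
  shows "mseries m a Y (\<lambda>w. b * y w)"
proof (rule mseriesI[of "{()}" "\<lambda>_. y" Y a "\<lambda>_. k" "\<lambda>_. b"])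
  fix w N
  show "b * y w - (\<Sum>i\<in>{i \<in> {()}. k < N}. b * y w) \<in> mpow m N"
    using assms(2) by (cases "k < N") (auto intro: mpow_mult_right mpow_antimonoD)
qed (use assms in auto)

lemma mseries_sum:
  assumes "finite I" "\<And>i. i \<in> I \<Longrightarrow> mseries m a Y (g i)"
  shows "mseries m a Y (\<lambda>w. \<Sum>i\<in>I. g i w)"
proof (rule mseries_series[where I=I and ord="\<lambda>_. a"])
  fix w N
  have "(\<Sum>i\<in>I. g i w) \<in> mpow m a" using assms(2) by (auto intro: mpow_sum mseries_coeff)
  then show "(\<Sum>i\<in>I. g i w) - (\<Sum>i\<in>{i \<in> I. a < N}. g i w) \<in> mpow m N"
    by (cases "a < N") (auto intro: mpow_antimonoD)
qed (use assms in auto)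

lemma mseries_add:
  assumes "mseries m a Y f" "mseries m a Y g"
  shows "mseries m a Y (\<lambda>w. f w + g w)"
  using mseries_sum[of "{True, False}" m a Y "\<lambda>i. if i then f else g"] assms by simp

lemma mseries_scale:
  assumes \<mu>: "\<mu> \<in> mpow m c" and z: "mseries m a Y z"
  shows "mseries m (a + c) Y (\<lambda>w. \<mu> * z w)"
  using z
proof (elim mseriesE)
  fix J :: "nat set" and b y k
  assume terms: "\<And>i. i \<in> J \<Longrightarrow> y i \<in> Y \<and> a \<le> k i \<and> b i \<in> mpow m (k i)"
    and fin: "\<And>n. finite {i\<in>J. k i \<le> n}"
    and conv: "\<And>w N. z w - (\<Sum>i\<in>{i\<in>J. k i < N}. b i * y i w) \<in> mpow m N"
  show ?thesis
  proof (rule mseriesI[of J y Y "a + c" "\<lambda>i. k i + c" "\<lambda>i. \<mu> * b i"])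
    fix i assume "i \<in> J"
    then show "y i \<in> Y \<and> a + c \<le> k i + c \<and> \<mu> * b i \<in> mpow m (k i + c)"
      using terms \<mu> mpow_mult[of \<mu> m c "b i" "k i"] by (auto simp: add.commute)
  next
    fix n show "finite {i \<in> J. k i + c \<le> n}"
      by (rule finite_subset[OF _ fin[of n]]) auto
  next
    fix w N
    show "\<mu> * z w - (\<Sum>i\<in>{i \<in> J. k i + c < N}. \<mu> * b i * y i w) \<in> mpow m N"
    proof (cases "c \<le> N")
      case True
      then have "{i \<in> J. k i + c < N} = {i \<in> J. k i < N - c}" by auto
      then have "\<mu> * z w - (\<Sum>i\<in>{i \<in> J. k i + c < N}. \<mu> * b i * y i w)
          = \<mu> * (z w - (\<Sum>i\<in>{i \<in> J. k i < N - c}. b i * y i w))"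
        by (simp add: sum_distrib_left right_diff_distrib mult.assoc)
      also have "\<dots> \<in> mpow m (c + (N - c))"
        using conv \<mu> by (intro mpow_mult)
      finally show ?thesis using True by simp
    next
      case False
      then have "{i \<in> J. k i + c < N} = {}" by auto
      moreover have "\<mu> * z w \<in> mpow m (c + a)"
        using mpow_mult[OF \<mu> mseries_coeff[OF z]] .
      ultimately show ?thesis using False by (auto intro: mpow_antimonoD)
    qed
  qed
qed

lemma mseries_flatten:
  assumes "mseries m a (Collect (mseries m 0 Y)) z"
  shows "mseries m a Y z"
  using assms
proof (elim mseriesE)
  fix J :: "nat set" and b y k
  assume terms: "\<And>i. i \<in> J \<Longrightarrow> y i \<in> Collect (mseries m 0 Y) \<and> a \<le> k i \<and> b i \<in> mpow m (k i)"
    and fin: "\<And>n. finite {i\<in>J. k i \<le> n}"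
    and conv: "\<And>w N. z w - (\<Sum>i\<in>{i\<in>J. k i < N}. b i * y i w) \<in> mpow m N"
  show ?thesis
  proof (rule mseries_series[where I=J and ord=k and g="\<lambda>i w. b i * y i w"])
    fix i assume "i \<in> J"
    then show "mseries m (k i) Y (\<lambda>w. b i * y i w)"
      using mseries_scale[of "b i" m "k i" 0 Y "y i"] terms by simp
  qed (use terms fin conv in simp_all)
qed

lemma mseries_lowest_terms:
  assumes "mseries m a Y z"
  shows "\<exists>(L::nat set) b y. finite L \<and> (\<forall>i\<in>L. y i \<in> Y \<and> b i \<in> mpow m a) \<and>
    mseries m (Suc a) Y (\<lambda>w. z w - (\<Sum>i\<in>L. b i * y i w))"
  using assms
proof (elim mseriesE)
  fix J :: "nat set" and b y k
  assume terms: "\<And>i. i \<in> J \<Longrightarrow> y i \<in> Y \<and> a \<le> k i \<and> b i \<in> mpow m (k i)"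
    and fin: "\<And>n. finite {i\<in>J. k i \<le> n}"
    and conv: "\<And>w N. z w - (\<Sum>i\<in>{i\<in>J. k i < N}. b i * y i w) \<in> mpow m N"
  define L where "L = {i\<in>J. k i \<le> a}"
  have L_terms: "\<And>i. i \<in> L \<Longrightarrow> y i \<in> Y \<and> b i \<in> mpow m a"
    unfolding L_def using terms le_antisym by fastforce
  have "mseries m (Suc a) Y (\<lambda>w. z w - (\<Sum>i\<in>L. b i * y i w))"
  proof (rule mseriesI[of "J - L" y Y "Suc a" k b])
    fix n show "finite {i \<in> J - L. k i \<le> n}"
      by (rule finite_subset[OF _ fin[of n]]) auto
  next
    fix w N
    show "z w - (\<Sum>i\<in>L. b i * y i w) - (\<Sum>i\<in>{i \<in> J - L. k i < N}. b i * y i w) \<in> mpow m N"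
    proof (cases "N \<le> Suc a")
      case True
      have "{i\<in>J. k i < Suc a} = L" unfolding L_def by auto
      then have "z w - (\<Sum>i\<in>L. b i * y i w) \<in> mpow m (Suc a)" using conv by metis
      moreover have "{i \<in> J - L. k i < N} = {}" using True unfolding L_def by auto
      ultimately show ?thesis using True by (simp only:) (auto intro: mpow_antimonoD)
    next
      case False
      then have split: "{i\<in>J. k i < N} = L \<union> {i \<in> J - L. k i < N}" unfolding L_def by auto
      have "finite L" "finite {i \<in> J - L. k i < N}"
        unfolding L_def using fin by (auto intro: finite_subset[OF _ fin[of N]])
      then have "(\<Sum>i\<in>{i\<in>J. k i < N}. b i * y i w)
          = (\<Sum>i\<in>L. b i * y i w) + (\<Sum>i\<in>{i \<in> J - L. k i < N}. b i * y i w)"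
        unfolding split by (rule sum.union_disjoint) auto
      then show ?thesis using conv[of w N] by (simp add: algebra_simps)
    qed
  qed (use terms in \<open>auto simp: L_def\<close>)
  moreover have "finite L" unfolding L_def using fin .
  ultimately show ?thesis using L_terms by (intro exI[of _ L] exI[of _ b] exI[of _ y]) blast
qed

lemma mseries_successive_approximation:
  fixes inv :: "nat \<Rightarrow> ('p \<Rightarrow> 'b::comm_ring_1) \<Rightarrow> bool"
  assumes step: "\<And>n z. inv n z \<Longrightarrow> \<exists>g. mseries m n Y g \<and> inv (Suc n) (\<lambda>w. z w - g w)"
    and coeff: "\<And>n z w. inv n z \<Longrightarrow> z w \<in> mpow m n"
    and start: "inv a x"
  shows "mseries m a Y x"
proof -
  define G where "G n z = (SOME g. mseries m n Y g \<and> inv (Suc n) (\<lambda>w. z w - g w))" for n z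
  have G: "mseries m n Y (G n z) \<and> inv (Suc n) (\<lambda>w. z w - G n z w)" if "inv n z" for n z
    unfolding G_def using step[OF that] by (rule someI_ex)
  define rest where "rest = rec_nat x (\<lambda>j z w. z w - G (a + j) z w)"
  have rest_Suc: "rest (Suc j) = (\<lambda>w. rest j w - G (a + j) (rest j) w)" for j
    unfolding rest_def by simp
  have inv_rest: "inv (a + j) (rest j)" for j
    by (induction j) (use start G in \<open>simp_all add: rest_def\<close>)
  define g where "g j = G (a + j) (rest j)" for j
  have partial: "x w - (\<Sum>i<j. g i w) = rest j w" for j w
    by (induction j) (simp_all add: rest_def g_def algebra_simps)
  show ?thesis
  proof (rule mseries_series[where I=UNIV and ord="\<lambda>j. a + j" and g=g])
    fix j :: nat show "mseries m (a + j) Y (g j)"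
      unfolding g_def using G[OF inv_rest] by blast
  next
    fix n :: nat show "finite {j \<in> UNIV. a + j \<le> n}"
      by (rule finite_subset[of _ "{..n}"]) auto
  next
    fix w N
    have "{j \<in> UNIV. a + j < N} = {..<N - a}" by auto
    moreover have "rest (N - a) w \<in> mpow m N"
      using coeff[OF inv_rest, of "N - a" w] by (rule mpow_antimonoD) simp
    ultimately show "x w - (\<Sum>j \<in> {j \<in> UNIV. a + j < N}. g j w) \<in> mpow m N"
      by (simp add: partial)
  qed simp
qed

lemma msums_iff_truncations:
  assumes terms: "\<And>i. i \<in> J \<Longrightarrow> f i \<in> mpow m (k i)" and fin: "\<And>n. finite {i\<in>J. k i \<le> n}"
  shows "msums m J f L \<longleftrightarrow> (\<forall>N. L - (\<Sum>i\<in>{i\<in>J. k i < N}. f i) \<in> mpow m N)"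
proof -
  have fin_less: "finite {i\<in>J. k i < N}" for N by (rule finite_subset[OF _ fin[of N]]) auto
  have close: "(\<Sum>i\<in>J \<inter> {..<M}. f i) - (\<Sum>i\<in>{i\<in>J. k i < N}. f i) \<in> mpow m N"
    if "{i\<in>J. k i < N} \<subseteq> {..<M}" for M N
  proof -
    define B where "B = {i\<in>J \<inter> {..<M}. \<not> k i < N}"
    have B: "J \<inter> {..<M} = {i\<in>J. k i < N} \<union> B" using that unfolding B_def by auto
    have "finite B" unfolding B_def by (rule finite_subset[of _ "{..<M}"]) auto
    then have "(\<Sum>i\<in>J \<inter> {..<M}. f i) = (\<Sum>i\<in>{i\<in>J. k i < N}. f i) + (\<Sum>i\<in>B. f i)"
      unfolding B by (intro sum.union_disjoint fin_less) (auto simp: B_def)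
    moreover have "(\<Sum>i\<in>B. f i) \<in> mpow m N"
      by (intro mpow_sum) (auto simp: B_def not_less intro: mpow_antimonoD[OF terms])
    ultimately show ?thesis by simp
  qed
  have bound: "\<exists>M0. {i\<in>J. k i < N} \<subseteq> {..<M0}" for N
    using fin_less finite_nat_bounded by blast
  show ?thesis
  proof
    assume sums: "msums m J f L"
    show "\<forall>N. L - (\<Sum>i\<in>{i\<in>J. k i < N}. f i) \<in> mpow m N"
    proof
      fix N
      obtain N0 where N0: "\<forall>M\<ge>N0. (\<Sum>j\<in>J \<inter> {..<M}. f j) - L \<in> mpow m N"
        using sums unfolding msums_def by blast
      obtain M0 where "{i\<in>J. k i < N} \<subseteq> {..<M0}" using bound by blast
      then have "{i\<in>J. k i < N} \<subseteq> {..<max M0 N0}" by auto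
      from mpow_diff[OF close[OF this] N0[rule_format, of "max M0 N0"]]
      show "L - (\<Sum>i\<in>{i\<in>J. k i < N}. f i) \<in> mpow m N" by simp
    qed
  next
    assume trunc: "\<forall>N. L - (\<Sum>i\<in>{i\<in>J. k i < N}. f i) \<in> mpow m N"
    show "msums m J f L" unfolding msums_def
    proof
      fix n
      obtain M0 where M0: "{i\<in>J. k i < n} \<subseteq> {..<M0}" using bound by blast
      have "(\<Sum>j\<in>J \<inter> {..<M}. f j) - L \<in> mpow m n" if "M0 \<le> M" for M
        using mpow_diff[OF close trunc[rule_format, of n], of M] M0 that by force
      then show "\<exists>N. \<forall>M\<ge>N. (\<Sum>j\<in>J \<inter> {..<M}. f j) - L \<in> mpow m n" by blast
    qed
  qed
qed

lemma mlin_eq_mseries: "mlin m a Y = Collect (mseries m a Y)"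
proof -
  have iff: "(\<forall>w. msums m J (\<lambda>i. b i * y i w) (x w))
      \<longleftrightarrow> (\<forall>w N. x w - (\<Sum>i\<in>{i\<in>J. k i < N}. b i * y i w) \<in> mpow m N)"
    if "\<forall>i\<in>J. y i \<in> Y \<and> a \<le> k i \<and> b i \<in> mpow m (k i)" "\<forall>n. finite {i\<in>J. k i \<le> n}"
    for J b y k and x
  proof -
    have "msums m J (\<lambda>i. b i * y i w) (x w)
        \<longleftrightarrow> (\<forall>N. x w - (\<Sum>i\<in>{i\<in>J. k i < N}. b i * y i w) \<in> mpow m N)" for w
      by (rule msums_iff_truncations) (use that in \<open>auto intro: mpow_mult_right\<close>)
    then show ?thesis by blast
  qed
  show ?thesis
  proof (intro set_eqI iffI)
    fix x assume "x \<in> mlin m a Y"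
    then obtain J b y k where H: "\<forall>i\<in>J. y i \<in> Y \<and> a \<le> k i \<and> b i \<in> mpow m (k i)"
      "\<forall>n. finite {i\<in>J. k i \<le> n}" "\<forall>w. msums m J (\<lambda>i. b i * y i w) (x w)"
      unfolding mlin_def by blast
    then show "x \<in> Collect (mseries m a Y)"
      unfolding mem_Collect_eq mseries_def mseries_expansion_def iff[OF H(1,2)]
      by (intro exI[of _ J] exI[of _ b] exI[of _ y] exI[of _ k]) blast
  next
    fix x assume "x \<in> Collect (mseries m a Y)"
    then obtain J :: "nat set" and b y k where H: "\<forall>i\<in>J. y i \<in> Y \<and> a \<le> k i \<and> b i \<in> mpow m (k i)"
      "\<forall>n. finite {i\<in>J. k i \<le> n}" "\<forall>w N. x w - (\<Sum>i\<in>{i\<in>J. k i < N}. b i * y i w) \<in> mpow m N"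
      unfolding mseries_def mseries_expansion_def by blast
    then show "x \<in> mlin m a Y"
      unfolding mlin_def mem_Collect_eq iff[OF H(1,2), symmetric]
      by (intro exI[of _ J] exI[of _ b] exI[of _ y] exI[of _ k]) blast
  qed
qed

lemma mlin_iff_mseries: "x \<in> mlin m a Y \<longleftrightarrow> mseries m a Y x"
  by (simp add: mlin_eq_mseries)

section \<open>Paths and two-sided multiplication\<close>

lemma plen_pcat [simp]: "plen (pcat x y) = plen x + plen y"
  by (simp add: plen_def pcat_def parrows_def)

lemma pstart_pcat [simp]: "pstart (pcat x y) = pstart x"
  by (simp add: pstart_def pcat_def)

lemma pend_pcat [simp]: "pend (pcat x y) = pend y"
  by (simp add: pend_def pcat_def)

lemma parrows_pcat [simp]: "parrows (pcat x y) = parrows x @ parrows y"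
  by (simp add: parrows_def pcat_def)

lemma is_path_pcat:
  assumes "is_path V A s t x" "is_path V A s t y" "pend x = pstart y"
  shows "is_path V A s t (pcat x y)"
proof -
  let ?xs = "parrows x" and ?ys = "parrows y"
  have X: "pstart x \<in> V" "pend x \<in> V" "set ?xs \<subseteq> A" "?xs = [] \<longrightarrow> pstart x = pend x"
    "?xs \<noteq> [] \<longrightarrow> s (hd ?xs) = pstart x \<and> t (last ?xs) = pend x \<and>
        (\<forall>i. Suc i < length ?xs \<longrightarrow> t (?xs ! i) = s (?xs ! Suc i))"
    using assms(1) unfolding is_path_def by auto
  have Y: "pstart y \<in> V" "pend y \<in> V" "set ?ys \<subseteq> A" "?ys = [] \<longrightarrow> pstart y = pend y"
    "?ys \<noteq> [] \<longrightarrow> s (hd ?ys) = pstart y \<and> t (last ?ys) = pend y \<and>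
        (\<forall>i. Suc i < length ?ys \<longrightarrow> t (?ys ! i) = s (?ys ! Suc i))"
    using assms(2) unfolding is_path_def by auto
  have chain: "t ((?xs @ ?ys) ! i) = s ((?xs @ ?ys) ! Suc i)" if "Suc i < length (?xs @ ?ys)" for i
  proof -
    consider "Suc i < length ?xs" | "Suc i = length ?xs" | "length ?xs \<le> i" by linarith
    then show ?thesis
    proof cases
      case 1 then show ?thesis using X(5) by (auto simp: nth_append)
    next
      case 2
      then have "?xs \<noteq> []" by auto
      moreover have "?ys \<noteq> []" using 2 that by auto
      moreover have "?xs ! i = last ?xs"
      proof -
        have "i = length ?xs - 1" using 2 by simp
        then show ?thesis using \<open>?xs \<noteq> []\<close> by (simp add: last_conv_nth)
      qed
      moreover have "?ys ! 0 = hd ?ys" using \<open>?ys \<noteq> []\<close> by (simp add: hd_conv_nth)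
      ultimately show ?thesis using 2 X(5) Y(5) assms(3) by (auto simp: nth_append)
    next
      case 3
      then show ?thesis using Y(5) that by (auto simp: nth_append Suc_diff_le)
    qed
  qed
  show ?thesis
    unfolding is_path_def using X Y assms(3) chain
    by (auto simp: hd_append last_append)
qed

lemma pmul3_nonzeroD:
  assumes "pmul3 V A s t p f q w \<noteq> 0"
  shows "\<exists>u. is_path V A s t u \<and> pend p = pstart u \<and> pend u = pstart q \<and> pcat (pcat p u) q = w \<and> f u \<noteq> 0"
  using sum.not_neutral_contains_not_neutral[OF assms[unfolded pmul3_def]] by blast

lemma pmul3_in_ideal:
  fixes f :: "('v,'a) qpath \<Rightarrow> 'r::comm_ring_1"
  assumes "is_ideal I" "\<And>u. f u \<in> I"
  shows "pmul3 V A s t p f q w \<in> I"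
  unfolding pmul3_def using assms by (intro ideal_sum) auto

lemma pmul3_notin_idealD:
  fixes f :: "('v,'a) qpath \<Rightarrow> 'r::comm_ring_1"
  assumes "is_ideal I" "pmul3 V A s t p f q w \<notin> I"
  shows "\<exists>u. pcat (pcat p u) q = w \<and> f u \<notin> I"
proof (rule ccontr)
  assume "\<not> ?thesis"
  then have "pmul3 V A s t p f q w \<in> I" unfolding pmul3_def by (intro ideal_sum[OF assms(1)]) auto
  with assms(2) show False by simp
qed

lemma pmul3_nonzero_plen: "pmul3 V A s t p f q w \<noteq> 0 \<Longrightarrow> plen p + plen q \<le> plen w"
  using pmul3_nonzeroD by fastforce

lemma pmul3_eq_0_off_paths:
  assumes "is_path V A s t p" "is_path V A s t q" "\<not> is_path V A s t w"
  shows "pmul3 V A s t p f q w = 0"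
proof (rule ccontr)
  assume "pmul3 V A s t p f q w \<noteq> 0"
  then obtain u where u: "is_path V A s t u" "pend p = pstart u" "pend u = pstart q"
    and w: "pcat (pcat p u) q = w"
    using pmul3_nonzeroD by blast
  have "is_path V A s t (pcat (pcat p u) q)"
    using u assms(1,2) by (intro is_path_pcat) auto
  with w assms(3) show False by simp
qed

lemma pmul3_add:
  "pmul3 V A s t p (\<lambda>u. f u + g u) q w = pmul3 V A s t p f q w + pmul3 V A s t p g q w"
  unfolding pmul3_def by (rule sum.distrib)

lemma pmul3_ring_hom_C:
  "ring_hom_C \<iota> \<Longrightarrow> pmul3 V A s t p (\<lambda>u. \<iota> (f u)) q w = \<iota> (pmul3 V A s t p f q w)"
  unfolding pmul3_def by (simp add: ring_hom_C_sum)

lemma pmul3_rpsi: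
  "ring_hom_C \<iota> \<Longrightarrow>
    pmul3 V A s t p (rpsi \<iota> \<psi> r) q w = \<iota> (pmul3 V A s t p r q w) + pmul3 V A s t p (\<psi> r) q w"
  unfolding rpsi_def by (simp add: pmul3_add pmul3_ring_hom_C)

definition P_monomials :: "'v set \<Rightarrow> 'a set \<Rightarrow> ('a \<Rightarrow> 'v) \<Rightarrow> ('a \<Rightarrow> 'v) \<Rightarrow>
    (complex \<Rightarrow> 'b::comm_ring_1) \<Rightarrow> (('v,'a) qpath \<Rightarrow> complex) set \<Rightarrow>
    ((('v,'a) qpath \<Rightarrow> complex) \<Rightarrow> (('v,'a) qpath \<Rightarrow> 'b)) \<Rightarrow> (('v,'a) qpath \<Rightarrow> 'b) set" where
  "P_monomials V A s t \<iota> R \<psi> =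
     {pmul3 V A s t p (rpsi \<iota> \<psi> r) q | p r q. r \<in> R \<and> is_path V A s t p \<and> is_path V A s t q}"

lemma P_monomialsI:
  "r \<in> R \<Longrightarrow> is_path V A s t p \<Longrightarrow> is_path V A s t q \<Longrightarrow>
    pmul3 V A s t p (rpsi \<iota> \<psi> r) q \<in> P_monomials V A s t \<iota> R \<psi>"
  unfolding P_monomials_def by blast

lemma IP_CQ_eq_mlin_P_monomials: "IP_CQ V A s t \<iota> m R \<psi> = mlin m 0 (P_monomials V A s t \<iota> R \<psi>)"
  unfolding IP_CQ_def P_monomials_def ..

lemma P_monomials_subset_Pideal_gen: "P_monomials V A s t \<iota> R \<psi> \<subseteq> Pideal_gen V A s t \<iota> R \<psi>"
proof
  fix x assume "x \<in> P_monomials V A s t \<iota> R \<psi>"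
  then obtain p r q where x: "x = pmul3 V A s t p (rpsi \<iota> \<psi> r) q"
    and "r \<in> R" "is_path V A s t p" "is_path V A s t q"
    unfolding P_monomials_def by blast
  have "x w = (\<Sum>i\<in>{i\<in>{0::nat}. plen p + plen q \<le> plen w}. pmul3 V A s t p (rpsi \<iota> \<psi> r) q w)" for w
    using pmul3_nonzero_plen[of V A s t p "rpsi \<iota> \<psi> r" q w] by (cases "plen p + plen q \<le> plen w") (auto simp: x)
  then show "x \<in> Pideal_gen V A s t \<iota> R \<psi>"
    unfolding Pideal_gen_def using \<open>r \<in> R\<close> \<open>is_path V A s t p\<close> \<open>is_path V A s t q\<close>
    by (intro CollectI exI[of _ "{0::nat}"] exI[of _ "\<lambda>_. r"] exI[of _ "\<lambda>_. p"] exI[of _ "\<lambda>_. q"]) auto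
qed

lemma Pideal_gen_eq_0_off_paths:
  assumes "Z \<in> Pideal_gen V A s t \<iota> R \<psi>" "\<not> is_path V A s t w"
  shows "Z w = 0"
proof -
  obtain J :: "nat set" and r p q where "\<forall>i\<in>J. r i \<in> R \<and> is_path V A s t (p i) \<and> is_path V A s t (q i)"
    "\<forall>w. Z w = (\<Sum>i\<in>{i\<in>J. plen (p i) + plen (q i) \<le> plen w}.
                    pmul3 V A s t (p i) (rpsi \<iota> \<psi> (r i)) (q i) w)"
    using assms(1) unfolding Pideal_gen_def by blast
  then show ?thesis
    using pmul3_eq_0_off_paths[OF _ _ assms(2)] by (simp only:) (blast intro: sum.neutral)
qed

section \<open>Elements that are finite modulo every power of \<open>m\<close>\<close>

definition mpow_cofinite :: "'b::comm_ring_1 set \<Rightarrow> ('p \<Rightarrow> 'b) \<Rightarrow> bool" where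
  "mpow_cofinite m f \<longleftrightarrow> (\<forall>k. finite {w. f w \<notin> mpow m k})"

lemma mpow_cofinite_add:
  assumes "mpow_cofinite m f" "mpow_cofinite m g"
  shows "mpow_cofinite m (\<lambda>w. f w + g w)"
  unfolding mpow_cofinite_def
proof
  fix k
  have "{w. f w + g w \<notin> mpow m k} \<subseteq> {w. f w \<notin> mpow m k} \<union> {w. g w \<notin> mpow m k}"
    using mpow_add by blast
  then show "finite {w. f w + g w \<notin> mpow m k}"
    using assms unfolding mpow_cofinite_def by (auto intro: finite_subset)
qed

lemma mpow_cofinite_mult:
  assumes "mpow_cofinite m f"
  shows "mpow_cofinite m (\<lambda>w. c * f w)"
  unfolding mpow_cofinite_def
proof
  fix k
  have "{w. c * f w \<notin> mpow m k} \<subseteq> {w. f w \<notin> mpow m k}"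
    using mpow_mult_left by blast
  then show "finite {w. c * f w \<notin> mpow m k}"
    using assms unfolding mpow_cofinite_def by (auto intro: finite_subset)
qed

lemma mpow_cofinite_diff:
  assumes "mpow_cofinite m f" "mpow_cofinite m g"
  shows "mpow_cofinite m (\<lambda>w. f w - g w)"
  using mpow_cofinite_add[OF assms(1) mpow_cofinite_mult[OF assms(2), of "- 1"]] by simp

lemma mpow_cofinite_sum:
  "finite I \<Longrightarrow> (\<And>i. i \<in> I \<Longrightarrow> mpow_cofinite m (g i)) \<Longrightarrow> mpow_cofinite m (\<lambda>w. \<Sum>i\<in>I. g i w)"
proof (induction I rule: finite_induct)
  case empty
  then show ?case by (simp add: mpow_cofinite_def)
next
  case (insert x F)
  then show ?case using mpow_cofinite_add[of m "g x" "\<lambda>w. \<Sum>i\<in>F. g i w"] by simp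
qed

section \<open>Lifting quasi-flatness from \<open>I(P)\<close> to \<open>I(P)\<^sub>\<complex>\<^sub>Q\<close>\<close>

text \<open>\<open>F\<close> is the basis of \<open>R\<close> provided by bounded type.\<close>

locale quasi_flat_deformation =
  fixes V :: "'v set" and A :: "'a set" and s t :: "'a \<Rightarrow> 'v"
    and \<iota> :: "complex \<Rightarrow> 'b::comm_ring_1" and m :: "'b set"
    and R :: "(('v,'a) qpath \<Rightarrow> complex) set"
    and \<psi> :: "(('v,'a) qpath \<Rightarrow> complex) \<Rightarrow> (('v,'a) qpath \<Rightarrow> 'b)"
    and F :: "(('v,'a) qpath \<Rightarrow> complex) set"
  assumes R_bimodule: "fd_sub_bimodule_ge1 V A s t R"
    and psi_bimodule_map: "bimod_map_to_mCQ V A s t \<iota> m R \<psi>"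
    and deformation_base: "deformation_base \<iota> m"
    and F_subset: "F \<subseteq> R"
    and R_span: "R \<subseteq> cspan F"
    and F_homogeneous: "\<And>c. c \<in> F \<Longrightarrow> \<exists>v w. \<forall>u. c u \<noteq> 0 \<longrightarrow> pstart u = v \<and> pend u = w"
    and F_bounded: "\<And>N. \<exists>M. \<forall>p q. is_path V A s t p \<and> plen p \<le> N \<and>
      equivclp (sim_step V A s t F) p q \<longrightarrow> plen q \<le> M"
    and IP_quasi_flat: "IP V A s t \<iota> m R \<psi> \<inter> mCQhat V A s t m \<subseteq> mlin m 1 (IP V A s t \<iota> m R \<psi>)"
begin

abbreviation P_sums where "P_sums \<equiv> Pideal_gen V A s t \<iota> R \<psi>"
abbreviation P_monos where "P_monos \<equiv> P_monomials V A s t \<iota> R \<psi>"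

lemma ring_hom: "ring_hom_C \<iota>"
  using deformation_base by (rule deformation_base_ring_hom_C)

lemma m_ideal: "is_ideal m"
  using deformation_base by (rule deformation_base_ideal)

lemma R_zero: "(\<lambda>w. 0) \<in> R"
  using R_bimodule unfolding fd_sub_bimodule_ge1_def by blast

lemma R_add: "r1 \<in> R \<Longrightarrow> r2 \<in> R \<Longrightarrow> (\<lambda>w. r1 w + r2 w) \<in> R"
  using R_bimodule unfolding fd_sub_bimodule_ge1_def by blast

lemma R_scale: "r \<in> R \<Longrightarrow> (\<lambda>w. c * r w) \<in> R"
  using R_bimodule unfolding fd_sub_bimodule_ge1_def by blast

lemma R_lincomb: "finite G \<Longrightarrow> G \<subseteq> R \<Longrightarrow> (\<lambda>w. \<Sum>g\<in>G. c g * g w) \<in> R"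
proof (induction G rule: finite_induct)
  case empty
  then show ?case using R_zero by simp
next
  case (insert x G)
  then have "(\<lambda>w. c x * x w + (\<Sum>g\<in>G. c g * g w)) \<in> R"
    by (intro R_add R_scale) auto
  then show ?case using insert by simp
qed

lemma R_finite_support: "r \<in> R \<Longrightarrow> finite {w. r w \<noteq> 0}"
  using R_bimodule unfolding fd_sub_bimodule_ge1_def by blast

lemma psi_add: "r1 \<in> R \<Longrightarrow> r2 \<in> R \<Longrightarrow> \<psi> (\<lambda>u. r1 u + r2 u) w = \<psi> r1 w + \<psi> r2 w"
  using psi_bimodule_map unfolding bimod_map_to_mCQ_def by blast

lemma psi_mCQ: "r \<in> R \<Longrightarrow> \<psi> r \<in> mCQ V A s t m"
  using psi_bimodule_map unfolding bimod_map_to_mCQ_def by blast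

lemma psi_in_m: "r \<in> R \<Longrightarrow> \<psi> r u \<in> m"
  using psi_mCQ unfolding mCQ_def mCQhat_def by blast

lemma psi_zero: "\<psi> (\<lambda>u. 0) w = 0"
  using psi_add[OF R_zero R_zero, of w] by simp

lemma rpsi_zero: "rpsi \<iota> \<psi> (\<lambda>u. 0) = (\<lambda>u. 0)"
  unfolding rpsi_def by (simp add: ring_hom_C_0[OF ring_hom] psi_zero)

lemma rpsi_add:
  "r1 \<in> R \<Longrightarrow> r2 \<in> R \<Longrightarrow> rpsi \<iota> \<psi> (\<lambda>u. r1 u + r2 u) u = rpsi \<iota> \<psi> r1 u + rpsi \<iota> \<psi> r2 u"
  unfolding rpsi_def by (simp add: psi_add ring_hom_C_add[OF ring_hom] algebra_simps)

lemma pmul3_rpsi_in_m: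
  assumes "r \<in> R" "pmul3 V A s t p r q w = 0"
  shows "pmul3 V A s t p (rpsi \<iota> \<psi> r) q w \<in> m"
proof -
  have "pmul3 V A s t p (\<psi> r) q w \<in> m"
    using psi_in_m[OF assms(1)] by (rule pmul3_in_ideal[OF m_ideal])
  then show ?thesis by (simp add: pmul3_rpsi[OF ring_hom] assms(2) ring_hom_C_0[OF ring_hom])
qed

lemma mpow_cofinite_P_monomial:
  assumes r: "r \<in> R"
  shows "mpow_cofinite m (pmul3 V A s t p (rpsi \<iota> \<psi> r) q)"
  unfolding mpow_cofinite_def
proof
  fix k
  let ?sandwich = "\<lambda>u. pcat (pcat p u) q"
  have "{w. pmul3 V A s t p (rpsi \<iota> \<psi> r) q w \<notin> mpow m k}
     \<subseteq> ?sandwich ` {u. r u \<noteq> 0} \<union> ?sandwich ` {u. \<psi> r u \<notin> mpow m k}"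
  proof
    fix w assume "w \<in> {w. pmul3 V A s t p (rpsi \<iota> \<psi> r) q w \<notin> mpow m k}"
    then have "\<iota> (pmul3 V A s t p r q w) + pmul3 V A s t p (\<psi> r) q w \<notin> mpow m k"
      by (simp add: pmul3_rpsi[OF ring_hom])
    then consider "\<iota> (pmul3 V A s t p r q w) \<notin> mpow m k" | "pmul3 V A s t p (\<psi> r) q w \<notin> mpow m k"
      using mpow_add by blast
    then show "w \<in> ?sandwich ` {u. r u \<noteq> 0} \<union> ?sandwich ` {u. \<psi> r u \<notin> mpow m k}"
    proof cases
      case 1
      then have "pmul3 V A s t p r q w \<noteq> 0" using ring_hom_C_0[OF ring_hom] by auto
      then obtain u where "pcat (pcat p u) q = w" "r u \<noteq> 0" using pmul3_nonzeroD by blast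
      then show ?thesis by blast
    next
      case 2
      then obtain u where "pcat (pcat p u) q = w" "\<psi> r u \<notin> mpow m k"
        using pmul3_notin_idealD[OF is_ideal_mpow] by blast
      then show ?thesis by blast
    qed
  qed
  moreover have "finite {u. \<psi> r u \<notin> mpow m k}"
    using psi_mCQ[OF r] unfolding mCQ_def by blast
  ultimately show "finite {w. pmul3 V A s t p (rpsi \<iota> \<psi> r) q w \<notin> mpow m k}"
    using R_finite_support[OF r] by (auto intro: finite_subset)
qed

lemma sim_step_sandwich:
  assumes "g \<in> F" "g u \<noteq> 0" "g ci \<noteq> 0" "pcat (pcat p ci) q \<in> C"
    "is_path V A s t p" "is_path V A s t q" "pend p = pstart u" "pend u = pstart q"
  shows "sim_step V A s t F (pcat (pcat p ci) q) (pcat (pcat p u) q)"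
proof -
  obtain v1 v2 where endpoints: "\<forall>x. g x \<noteq> 0 \<longrightarrow> pstart x = v1 \<and> pend x = v2"
    using F_homogeneous[OF assms(1)] by blast
  have "pstart ci = pstart u" "pend ci = pend u"
    using endpoints[rule_format, OF assms(2)] endpoints[rule_format, OF assms(3)] by simp_all
  then show ?thesis
    unfolding sim_step_def using assms
    by (intro bexI[OF _ assms(1)] exI[of _ ci] exI[of _ u] exI[of _ p] exI[of _ q]) auto
qed

definition bounded_sim_closed :: "('v,'a) qpath set \<Rightarrow> nat \<Rightarrow> bool" where
  "bounded_sim_closed C M \<longleftrightarrow>
     (\<forall>x y. x \<in> C \<longrightarrow> sim_step V A s t F x y \<longrightarrow> y \<in> C) \<and> (\<forall>x\<in>C. plen x \<le> M)"

lemma bounded_sim_closed_support: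
  assumes "mpow_cofinite m z" and off_paths: "\<And>w. \<not> is_path V A s t w \<Longrightarrow> z w \<in> mpow m k"
  shows "\<exists>C M. bounded_sim_closed C M \<and> (\<forall>w. w \<notin> C \<longrightarrow> z w \<in> mpow m k)"
proof -
  define W where "W = {w. z w \<notin> mpow m k}"
  have "finite W" using assms(1) unfolding W_def mpow_cofinite_def by blast
  then have W_le: "plen u \<le> (\<Sum>u\<in>W. plen u)" if "u \<in> W" for u
    using that by (intro member_le_sum) auto
  obtain M where M: "\<forall>p q. is_path V A s t p \<and> plen p \<le> (\<Sum>u\<in>W. plen u) \<and>
      equivclp (sim_step V A s t F) p q \<longrightarrow> plen q \<le> M"
    using F_bounded by blast
  define C where "C = {x. \<exists>u\<in>W. equivclp (sim_step V A s t F) u x}"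
  have "y \<in> C" if x: "x \<in> C" and xy: "sim_step V A s t F x y" for x y
  proof -
    obtain u where u: "u \<in> W" and ux: "equivclp (sim_step V A s t F) u x"
      using x unfolding C_def by blast
    have "equivclp (sim_step V A s t F) u y"
      using equivclp_trans[OF ux r_into_equivclp[where r="sim_step V A s t F", OF xy]] .
    then show ?thesis unfolding C_def using u by blast
  qed
  moreover have "plen x \<le> M" if "x \<in> C" for x
    using that M W_le off_paths unfolding C_def W_def by blast
  moreover have "z w \<in> mpow m k" if "w \<notin> C" for w
    using that equivclp_refl[of _ w] unfolding C_def W_def by blast
  ultimately show ?thesis unfolding bounded_sim_closed_def by blast
qed

text \<open>Write \<open>r = \<Sum> c\<^sub>g g\<close> over the basis \<open>F\<close> and keep as head those \<open>g\<close> for which some \<open>p c\<^sub>i q\<close>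
  (\<open>c\<^sub>i\<close> a path of \<open>g\<close>) lies in \<open>C\<close>. As \<open>g\<close> is homogeneous, all its paths \<open>c\<^sub>j\<close> give \<open>p c\<^sub>j q \<sim> p c\<^sub>i q\<close>,
  so \<open>p g q\<close> is supported in \<open>C\<close> for head terms and outside \<open>C\<close> for tail terms.\<close>

lemma relation_head_split:
  assumes r: "r \<in> R" and p: "is_path V A s t p" and q: "is_path V A s t q"
    and C: "bounded_sim_closed C M"
  shows "\<exists>h. h \<in> R \<and> (\<lambda>u. r u - h u) \<in> R \<and>
    (\<forall>w. w \<notin> C \<longrightarrow> pmul3 V A s t p h q w = 0) \<and>
    (\<forall>w\<in>C. pmul3 V A s t p (\<lambda>u. r u - h u) q w = 0) \<and>
    (M < plen p + plen q \<longrightarrow> h = (\<lambda>u. 0))"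
proof -
  have "r \<in> cspan F" using R_span r by (rule subsetD)
  then obtain G c where G: "finite G" "G \<subseteq> F" and r_eq: "\<And>w. r w = (\<Sum>g\<in>G. c g * g w)"
    unfolding cspan_def by blast
  define head where "head = {g\<in>G. \<exists>ci. g ci \<noteq> 0 \<and> pcat (pcat p ci) q \<in> C}"
  define h where "h w = (\<Sum>g\<in>head. c g * g w)" for w
  have "head \<subseteq> G" unfolding head_def by blast
  then have tail: "r w - h w = (\<Sum>g\<in>G - head. c g * g w)" for w
    unfolding r_eq h_def using G(1) by (simp add: sum_diff)
  have "h \<in> R" unfolding h_def using G F_subset by (intro R_lincomb) (auto simp: head_def)
  moreover have "(\<lambda>u. r u - h u) \<in> R" unfolding tail using G F_subset by (intro R_lincomb) auto
  moreover have "\<forall>w. w \<notin> C \<longrightarrow> pmul3 V A s t p h q w = 0"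
  proof (intro allI impI, rule ccontr)
    fix w assume "w \<notin> C" "pmul3 V A s t p h q w \<noteq> 0"
    then obtain u where u: "pend p = pstart u" "pend u = pstart q" "h u \<noteq> 0"
      and w: "w = pcat (pcat p u) q"
      using pmul3_nonzeroD by blast
    from \<open>h u \<noteq> 0\<close> obtain g where "g \<in> head" "c g * g u \<noteq> 0"
      unfolding h_def by (rule sum.not_neutral_contains_not_neutral)
    then obtain ci where g: "g \<in> F" "g u \<noteq> 0" "g ci \<noteq> 0" "pcat (pcat p ci) q \<in> C"
      unfolding head_def using G(2) by auto
    then have "sim_step V A s t F (pcat (pcat p ci) q) w"
      unfolding w using p q u(1,2) by (rule sim_step_sandwich)
    then show False using C g(4) \<open>w \<notin> C\<close> unfolding bounded_sim_closed_def by blast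
  qed
  moreover have "\<forall>w\<in>C. pmul3 V A s t p (\<lambda>u. r u - h u) q w = 0"
  proof (rule ballI, rule ccontr)
    fix w assume "w \<in> C" "pmul3 V A s t p (\<lambda>u. r u - h u) q w \<noteq> 0"
    then obtain u where u: "pcat (pcat p u) q = w" "r u - h u \<noteq> 0"
      using pmul3_nonzeroD by blast
    from \<open>r u - h u \<noteq> 0\<close> obtain g where "g \<in> G - head" "c g * g u \<noteq> 0"
      unfolding tail by (rule sum.not_neutral_contains_not_neutral)
    then have "g \<in> G" "g \<notin> head" "g u \<noteq> 0" by auto
    then show False using u \<open>w \<in> C\<close> unfolding head_def by blast
  qed
  moreover have "M < plen p + plen q \<longrightarrow> h = (\<lambda>u. 0)"
  proof
    assume "M < plen p + plen q"
    then have "head = {}" using C unfolding head_def bounded_sim_closed_def by fastforce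
    then show "h = (\<lambda>u. 0)" unfolding h_def by (simp add: fun_eq_iff)
  qed
  ultimately show ?thesis by (intro exI[of _ h] conjI)
qed

text \<open>Both sides equal the sum over \<open>|p\<^sub>i| + |q\<^sub>i| \<le> min M |w|\<close>: beyond \<open>M\<close> the \<open>h\<^sub>i\<close> vanish,
  beyond \<open>|w|\<close> the monomial has no path of length \<open>|w|\<close>.\<close>

lemma sum_pmul3_rpsi_truncate:
  assumes fin: "\<And>n. finite {i\<in>J. plen (p i) + plen (q i) \<le> n}"
    and vanish: "\<And>i. i \<in> J \<Longrightarrow> M < plen (p i) + plen (q i) \<Longrightarrow> h i = (\<lambda>u. 0)"
  shows "(\<Sum>i\<in>{i\<in>J. plen (p i) + plen (q i) \<le> plen w}. pmul3 V A s t (p i) (rpsi \<iota> \<psi> (h i)) (q i) w)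
    = (\<Sum>i\<in>{i\<in>J. plen (p i) + plen (q i) \<le> M}. pmul3 V A s t (p i) (rpsi \<iota> \<psi> (h i)) (q i) w)"
    (is "(\<Sum>i\<in>?I_at. ?f i) = (\<Sum>i\<in>?I_head. ?f i)")
proof -
  have "(\<Sum>i\<in>?I_at. ?f i) = (\<Sum>i\<in>?I_at \<inter> ?I_head. ?f i)"
  proof (rule sum.mono_neutral_right)
    show "\<forall>i\<in>?I_at - ?I_at \<inter> ?I_head. ?f i = 0"
    proof
      fix i assume "i \<in> ?I_at - ?I_at \<inter> ?I_head"
      then have "h i = (\<lambda>u. 0)" by (intro vanish) auto
      then show "?f i = 0" by (simp add: rpsi_zero pmul3_def)
    qed
  qed (use fin in auto)
  also have "\<dots> = (\<Sum>i\<in>?I_head. ?f i)"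
    using fin pmul3_nonzero_plen[of V A s t "p _" _ "q _" w] by (intro sum.mono_neutral_left) auto
  finally show ?thesis .
qed

lemma P_sums_head_split:
  assumes Z: "Z \<in> P_sums" and C: "bounded_sim_closed C M"
  shows "\<exists>H. mseries m 0 P_monos H \<and> mpow_cofinite m H \<and> (\<forall>w. w \<notin> C \<longrightarrow> H w \<in> m) \<and>
    (\<lambda>w. Z w - H w) \<in> P_sums \<and> (\<forall>w\<in>C. Z w - H w \<in> m)"
proof -
  obtain J :: "nat set" and r p q
    where gens: "\<forall>i\<in>J. r i \<in> R \<and> is_path V A s t (p i) \<and> is_path V A s t (q i)"
    and fin: "\<forall>n. finite {i\<in>J. plen (p i) + plen (q i) \<le> n}"
    and Z_eq: "\<forall>w. Z w = (\<Sum>i\<in>{i\<in>J. plen (p i) + plen (q i) \<le> plen w}.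
                    pmul3 V A s t (p i) (rpsi \<iota> \<psi> (r i)) (q i) w)"
    using Z unfolding Pideal_gen_def by blast
  define is_head where "is_head i h \<longleftrightarrow> h \<in> R \<and> (\<lambda>u. r i u - h u) \<in> R \<and>
      (\<forall>w. w \<notin> C \<longrightarrow> pmul3 V A s t (p i) h (q i) w = 0) \<and>
      (\<forall>w\<in>C. pmul3 V A s t (p i) (\<lambda>u. r i u - h u) (q i) w = 0) \<and>
      (M < plen (p i) + plen (q i) \<longrightarrow> h = (\<lambda>u. 0))" for i h
  have "\<exists>h. is_head i h" if "i \<in> J" for i
    unfolding is_head_def using gens that by (intro relation_head_split[OF _ _ _ C]) auto
  then obtain h where "\<And>i. i \<in> J \<Longrightarrow> is_head i (h i)"
    using bchoice[of J is_head] by blast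
  then have h: "\<And>i. i \<in> J \<Longrightarrow> h i \<in> R \<and> (\<lambda>u. r i u - h i u) \<in> R \<and>
      (\<forall>w. w \<notin> C \<longrightarrow> pmul3 V A s t (p i) (h i) (q i) w = 0) \<and>
      (\<forall>w\<in>C. pmul3 V A s t (p i) (\<lambda>u. r i u - h i u) (q i) w = 0) \<and>
      (M < plen (p i) + plen (q i) \<longrightarrow> h i = (\<lambda>u. 0))"
    unfolding is_head_def by blast
  define I_head where "I_head = {i\<in>J. plen (p i) + plen (q i) \<le> M}"
  define I_at where "I_at w = {i\<in>J. plen (p i) + plen (q i) \<le> plen w}" for w :: "('v,'a) qpath"
  define H where "H w = (\<Sum>i\<in>I_head. pmul3 V A s t (p i) (rpsi \<iota> \<psi> (h i)) (q i) w)" for w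
  define T where "T w = (\<Sum>i\<in>I_at w. pmul3 V A s t (p i) (rpsi \<iota> \<psi> (\<lambda>u. r i u - h i u)) (q i) w)" for w
  have fin_head: "finite I_head" unfolding I_head_def using fin by blast
  have Z_split: "Z w = H w + T w" for w
  proof -
    have "Z w = (\<Sum>i\<in>I_at w. pmul3 V A s t (p i) (rpsi \<iota> \<psi> (h i)) (q i) w) + T w"
      unfolding Z_eq[rule_format] T_def I_at_def sum.distrib[symmetric] using gens h
      by (intro sum.cong) (auto simp: rpsi_add[symmetric] pmul3_add[symmetric])
    also have "(\<Sum>i\<in>I_at w. pmul3 V A s t (p i) (rpsi \<iota> \<psi> (h i)) (q i) w) = H w"
      unfolding H_def I_at_def I_head_def using fin h by (intro sum_pmul3_rpsi_truncate) auto
    finally show ?thesis .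
  qed
  have "mseries m 0 P_monos H"
    unfolding H_def using fin_head gens h
    by (intro mseries_sum mseries_member P_monomialsI) (auto simp: I_head_def)
  moreover have "mpow_cofinite m H"
    unfolding H_def using fin_head gens h
    by (intro mpow_cofinite_sum mpow_cofinite_P_monomial) (auto simp: I_head_def)
  moreover have "H w \<in> m" if "w \<notin> C" for w
    unfolding H_def using that gens h
    by (intro ideal_sum[OF m_ideal] pmul3_rpsi_in_m) (auto simp: I_head_def simp del: split_paired_All)
  moreover have "(\<lambda>w. Z w - H w) \<in> P_sums"
    unfolding Z_split Pideal_gen_def using gens h fin
    by (intro CollectI exI[of _ J] exI[of _ "\<lambda>i u. r i u - h i u"] exI[of _ p] exI[of _ q])
      (auto simp: T_def I_at_def)
  moreover have "Z w - H w \<in> m" if "w \<in> C" for w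
    unfolding Z_split T_def using that gens h
    by (auto simp: I_at_def simp del: split_paired_All intro!: ideal_sum[OF m_ideal] pmul3_rpsi_in_m)
  ultimately show ?thesis by blast
qed


lemma mseries_of_IP_mCQhat:
  assumes "mseries m 0 P_sums Y" "Y \<in> mCQhat V A s t m"
  shows "mseries m 1 P_sums Y"
proof -
  have "Y \<in> IP V A s t \<iota> m R \<psi>" unfolding IP_def mlin_iff_mseries by (rule assms(1))
  then have "Y \<in> mlin m 1 (IP V A s t \<iota> m R \<psi>)" using IP_quasi_flat assms(2) by blast
  then have "mseries m 1 (Collect (mseries m 0 P_sums)) Y"
    by (simp add: IP_def mlin_eq_mseries)
  then show ?thesis by (rule mseries_flatten)
qed

text \<open>Expand the \<open>\<beta>\<^sub>i\<close> in a basis \<open>X\<close> of \<open>m\<^sup>a / m\<^sup>a\<^sup>+\<^sup>1\<close>: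
  \<open>\<Sum> \<beta>\<^sub>i T\<^sub>i \<equiv> \<Sum>\<^sub>\<mu> \<mu> Y\<^sub>\<mu>\<close> with \<open>Y\<^sub>\<mu> \<in> I(P)\<close>. Smallness of the sum and independence of \<open>X\<close>
  put all coefficients of \<open>Y\<^sub>\<mu>\<close> into \<open>m\<close>, and quasi-flatness of \<open>I(P)\<close> then gives \<open>Y\<^sub>\<mu> \<in> m I(P)\<close>.\<close>

lemma small_combination_mseries:
  assumes L: "finite L" and terms: "\<And>i. i \<in> L \<Longrightarrow> \<beta> i \<in> mpow m a \<and> T i \<in> P_sums"
    and small: "\<And>w. (\<Sum>i\<in>L. \<beta> i * T i w) \<in> mpow m (Suc a)"
  shows "mseries m (Suc a) P_sums (\<lambda>w. \<Sum>i\<in>L. \<beta> i * T i w)"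
proof -
  have "\<exists>X \<epsilon> y. finite X \<and> X \<subseteq> mpow m a \<and> (\<forall>i\<in>L. \<epsilon> i \<in> mpow m (Suc a)) \<and>
    (\<forall>w. (\<Sum>i\<in>L. \<beta> i * T i w) = (\<Sum>i\<in>L. \<epsilon> i * T i w) + (\<Sum>\<mu>\<in>X. \<mu> * (\<Sum>i\<in>L. y i \<mu> * T i w))) \<and>
    (\<forall>\<mu>\<in>X. \<forall>w. (\<Sum>i\<in>L. y i \<mu> * T i w) \<in> m)"
    using deformation_base L terms small by (intro small_combination_decomposition) auto
  then obtain X \<epsilon> y where X: "finite X" "X \<subseteq> mpow m a" and \<epsilon>: "\<forall>i\<in>L. \<epsilon> i \<in> mpow m (Suc a)"
    and decomp: "\<forall>w. (\<Sum>i\<in>L. \<beta> i * T i w) = (\<Sum>i\<in>L. \<epsilon> i * T i w) + (\<Sum>\<mu>\<in>X. \<mu> * (\<Sum>i\<in>L. y i \<mu> * T i w))"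
    and Y_m: "\<forall>\<mu>\<in>X. \<forall>w. (\<Sum>i\<in>L. y i \<mu> * T i w) \<in> m"
    by blast
  have "mseries m (Suc a) P_sums (\<lambda>w. \<Sum>i\<in>L. \<epsilon> i * T i w)"
    using L terms \<epsilon> by (intro mseries_sum mseries_single[where k="Suc a"]) auto
  moreover have "mseries m (Suc a) P_sums (\<lambda>w. \<mu> * (\<Sum>i\<in>L. y i \<mu> * T i w))" if \<mu>: "\<mu> \<in> X" for \<mu>
  proof -
    have "mseries m 0 P_sums (\<lambda>w. \<Sum>i\<in>L. y i \<mu> * T i w)"
      using L terms by (intro mseries_sum mseries_single[where k=0]) auto
    moreover have "(\<lambda>w. \<Sum>i\<in>L. y i \<mu> * T i w) \<in> mCQhat V A s t m"
    proof -
      have "T i w = 0" if "i \<in> L" "\<not> is_path V A s t w" for i w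
        using terms[OF that(1)] Pideal_gen_eq_0_off_paths that(2) by blast
      then show ?thesis unfolding mCQhat_def using Y_m \<mu> by simp
    qed
    ultimately have "mseries m 1 P_sums (\<lambda>w. \<Sum>i\<in>L. y i \<mu> * T i w)" by (rule mseries_of_IP_mCQhat)
    then have "mseries m (1 + a) P_sums (\<lambda>w. \<mu> * (\<Sum>i\<in>L. y i \<mu> * T i w))"
      using X \<mu> by (intro mseries_scale) auto
    then show ?thesis by simp
  qed
  then have "mseries m (Suc a) P_sums (\<lambda>w. \<Sum>\<mu>\<in>X. \<mu> * (\<Sum>i\<in>L. y i \<mu> * T i w))"
    using X by (intro mseries_sum) auto
  ultimately have "mseries m (Suc a) P_sums
      (\<lambda>w. (\<Sum>i\<in>L. \<epsilon> i * T i w) + (\<Sum>\<mu>\<in>X. \<mu> * (\<Sum>i\<in>L. y i \<mu> * T i w)))"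
    by (rule mseries_add)
  then show ?thesis using decomp by (simp only: fun_eq_iff[symmetric])
qed

text \<open>Let \<open>C\<close> be the \<open>\<sim>\<close>-closure of the finitely many paths at which \<open>z\<close> is nonzero modulo
  \<open>m\<^sup>a\<^sup>+\<^sup>1\<close>. Splitting the lowest terms \<open>Z\<^sub>i\<close> of \<open>z\<close> into heads and tails relative to \<open>C\<close>, the tails are
  small everywhere: on \<open>C\<close> because they vanish modulo \<open>m\<close> there, off \<open>C\<close> because \<open>z\<close> and the heads do.\<close>

lemma lowest_terms_head_split:
  assumes L: "finite L" and Z: "\<And>i. i \<in> L \<Longrightarrow> Z i \<in> P_sums" and \<beta>: "\<And>i. i \<in> L \<Longrightarrow> \<beta> i \<in> mpow m a"
    and z_cofinite: "mpow_cofinite m z"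
    and rest: "\<And>w. z w - (\<Sum>i\<in>L. \<beta> i * Z i w) \<in> mpow m (Suc a)"
  shows "\<exists>H. (\<forall>i\<in>L. mseries m 0 P_monos (H i) \<and> mpow_cofinite m (H i) \<and> (\<lambda>w. Z i w - H i w) \<in> P_sums) \<and>
    (\<forall>w. (\<Sum>i\<in>L. \<beta> i * (Z i w - H i w)) \<in> mpow m (Suc a))"
proof -
  have "z w \<in> mpow m (Suc a)" if "\<not> is_path V A s t w" for w
  proof -
    have "Z i w = 0" if "i \<in> L" for i
      using Pideal_gen_eq_0_off_paths[OF Z[OF that]] \<open>\<not> is_path V A s t w\<close> by blast
    then show ?thesis using rest[of w] by simp
  qed
  then have "\<exists>C M. bounded_sim_closed C M \<and> (\<forall>w. w \<notin> C \<longrightarrow> z w \<in> mpow m (Suc a))"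
    using z_cofinite by (intro bounded_sim_closed_support)
  then obtain C M where C: "bounded_sim_closed C M" and outside: "\<And>w. w \<notin> C \<Longrightarrow> z w \<in> mpow m (Suc a)"
    by blast
  define is_head where "is_head i H \<longleftrightarrow> mseries m 0 P_monos H \<and> mpow_cofinite m H \<and>
      (\<forall>w. w \<notin> C \<longrightarrow> H w \<in> m) \<and> (\<lambda>w. Z i w - H w) \<in> P_sums \<and> (\<forall>w\<in>C. Z i w - H w \<in> m)"
    for i H
  have "\<exists>H. is_head i H" if "i \<in> L" for i
    unfolding is_head_def using Z[OF that] C by (rule P_sums_head_split)
  then obtain H where "\<And>i. i \<in> L \<Longrightarrow> is_head i (H i)"
    using bchoice[of L is_head] by blast
  then have H: "\<forall>i\<in>L. mseries m 0 P_monos (H i) \<and> mpow_cofinite m (H i) \<and> (\<lambda>w. Z i w - H i w) \<in> P_sums"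
    and H_outside: "\<And>i w. i \<in> L \<Longrightarrow> w \<notin> C \<Longrightarrow> H i w \<in> m"
    and tail_inside: "\<And>i w. i \<in> L \<Longrightarrow> w \<in> C \<Longrightarrow> Z i w - H i w \<in> m"
    unfolding is_head_def by blast+
  have "(\<Sum>i\<in>L. \<beta> i * (Z i w - H i w)) \<in> mpow m (Suc a)" for w
  proof (cases "w \<in> C")
    case True
    have "\<beta> i * (Z i w - H i w) \<in> mpow m (Suc a)" if "i \<in> L" for i
      using mpow_Suc_mult[OF tail_inside[OF that True] \<beta>[OF that]] by (simp add: mult.commute)
    then show ?thesis by (rule mpow_sum)
  next
    case False
    have "(\<Sum>i\<in>L. \<beta> i * Z i w) \<in> mpow m (Suc a)"
      using mpow_diff[OF outside[OF False] rest[of w]] by simp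
    moreover have "\<beta> i * H i w \<in> mpow m (Suc a)" if "i \<in> L" for i
      using mpow_Suc_mult[OF H_outside[OF that False] \<beta>[OF that]] by (simp add: mult.commute)
    then have "(\<Sum>i\<in>L. \<beta> i * H i w) \<in> mpow m (Suc a)" by (rule mpow_sum)
    ultimately show ?thesis
      using mpow_diff by (simp add: right_diff_distrib sum_subtractf)
  qed
  with H show ?thesis by blast
qed

lemma approximation_step:
  assumes z: "mseries m a P_sums z" and z_cofinite: "mpow_cofinite m z"
  shows "\<exists>g. mseries m a P_monos g \<and> mpow_cofinite m g \<and> mseries m (Suc a) P_sums (\<lambda>w. z w - g w)"
proof -
  obtain L :: "nat set" and \<beta> Z where L: "finite L" and terms: "\<forall>i\<in>L. Z i \<in> P_sums \<and> \<beta> i \<in> mpow m a"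
    and rest: "mseries m (Suc a) P_sums (\<lambda>w. z w - (\<Sum>i\<in>L. \<beta> i * Z i w))"
    using mseries_lowest_terms[OF z] by blast
  have "\<exists>H. (\<forall>i\<in>L. mseries m 0 P_monos (H i) \<and> mpow_cofinite m (H i) \<and> (\<lambda>w. Z i w - H i w) \<in> P_sums) \<and>
      (\<forall>w. (\<Sum>i\<in>L. \<beta> i * (Z i w - H i w)) \<in> mpow m (Suc a))"
    using L terms z_cofinite mseries_coeff[OF rest] by (intro lowest_terms_head_split) auto
  then obtain H where H: "\<forall>i\<in>L. mseries m 0 P_monos (H i) \<and> mpow_cofinite m (H i) \<and> (\<lambda>w. Z i w - H i w) \<in> P_sums"
    and tails_small: "\<forall>w. (\<Sum>i\<in>L. \<beta> i * (Z i w - H i w)) \<in> mpow m (Suc a)"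
    by blast
  define g where "g w = (\<Sum>i\<in>L. \<beta> i * H i w)" for w
  have "mseries m a P_monos g"
    unfolding g_def using L terms H mseries_scale[of "\<beta> _" m a 0 P_monos "H _"]
    by (intro mseries_sum) auto
  moreover have "mpow_cofinite m g"
    unfolding g_def using L H by (intro mpow_cofinite_sum mpow_cofinite_mult) auto
  moreover have "mseries m (Suc a) P_sums (\<lambda>w. \<Sum>i\<in>L. \<beta> i * (Z i w - H i w))"
    using L terms H tails_small by (intro small_combination_mseries) auto
  then have "mseries m (Suc a) P_sums
      (\<lambda>w. (z w - (\<Sum>i\<in>L. \<beta> i * Z i w)) + (\<Sum>i\<in>L. \<beta> i * (Z i w - H i w)))"
    by (rule mseries_add[OF rest])
  then have "mseries m (Suc a) P_sums (\<lambda>w. z w - g w)"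
    by (simp add: g_def right_diff_distrib sum_subtractf)
  ultimately show ?thesis by blast
qed

theorem IP_CQ_quasi_flat:
  "IP_CQ V A s t \<iota> m R \<psi> \<inter> mCQ V A s t m \<subseteq> mlin m 1 (IP_CQ V A s t \<iota> m R \<psi>)"
proof
  fix x assume x: "x \<in> IP_CQ V A s t \<iota> m R \<psi> \<inter> mCQ V A s t m"
  then have "mseries m 0 P_monos x" by (simp add: IP_CQ_eq_mlin_P_monomials mlin_iff_mseries)
  then have "mseries m 0 P_sums x" using P_monomials_subset_Pideal_gen by (rule mseries_mono) simp
  then have "mseries m 1 P_sums x"
    using x unfolding mCQ_def by (intro mseries_of_IP_mCQhat) auto
  moreover have "mpow_cofinite m x" using x unfolding mCQ_def mpow_cofinite_def by blast
  ultimately have "mseries m 1 P_sums x \<and> mpow_cofinite m x" ..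
  then have "mseries m 1 P_monos x"
  proof (rule mseries_successive_approximation[where inv="\<lambda>n z. mseries m n P_sums z \<and> mpow_cofinite m z",
        rotated 2])
    fix n z assume "mseries m n P_sums z \<and> mpow_cofinite m z"
    then show "\<exists>g. mseries m n P_monos g \<and>
        mseries m (Suc n) P_sums (\<lambda>w. z w - g w) \<and> mpow_cofinite m (\<lambda>w. z w - g w)"
      using approximation_step[of n z] mpow_cofinite_diff by blast
  next
    fix n z w assume "mseries m n P_sums z \<and> mpow_cofinite m z"
    then show "z w \<in> mpow m n" by (auto intro: mseries_coeff)
  qed
  then show "x \<in> mlin m 1 (IP_CQ V A s t \<iota> m R \<psi>)"
    unfolding IP_CQ_eq_mlin_P_monomials mlin_iff_mseries
    by (rule mseries_mono) (auto simp: mlin_iff_mseries intro: mseries_member)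
qed

end

theorem proposition6p48:
  fixes V :: "'v set" and A :: "'a set" and s t :: "'a \<Rightarrow> 'v"
    and \<iota> :: "complex \<Rightarrow> 'b::comm_ring_1" and m :: "'b set"
    and R :: "(('v,'a) qpath \<Rightarrow> complex) set"
    and \<psi> :: "(('v,'a) qpath \<Rightarrow> complex) \<Rightarrow> (('v,'a) qpath \<Rightarrow> 'b)"
  assumes "finite_quiver V A s t"
    and "fd_sub_bimodule_ge1 V A s t R"
    and "bounded_type V A s t R"
    and "deformation_base \<iota> m"
    and "bimod_map_to_mCQ V A s t \<iota> m R \<psi>"
    and "IP V A s t \<iota> m R \<psi> \<inter> mCQhat V A s t m \<subseteq> mlin m 1 (IP V A s t \<iota> m R \<psi>)"
  shows "IP_CQ V A s t \<iota> m R \<psi> \<inter> mCQ V A s t m \<subseteq> mlin m 1 (IP_CQ V A s t \<iota> m R \<psi>)"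
proof -
  obtain F where "F \<subseteq> R" "R \<subseteq> cspan F"
    and "\<forall>c\<in>F. \<exists>v\<in>V. \<exists>w\<in>V. \<forall>u. c u \<noteq> 0 \<longrightarrow> pstart u = v \<and> pend u = w"
    and "\<forall>N. \<exists>M. \<forall>p q. is_path V A s t p \<and> plen p \<le> N \<and> equivclp (sim_step V A s t F) p q
            \<longrightarrow> plen q \<le> M"
    using assms(3) unfolding bounded_type_def by blast
  then interpret quasi_flat_deformation V A s t \<iota> m R \<psi> F
    using assms(2,4-6) by unfold_locales blast+
  show ?thesis by (rule IP_CQ_quasi_flat)
qed

end
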